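(* Let $K$ be a real quadratic field with $\mathcal O_K$ principal and $\Gamma=\mathbf{SL}_2(\mathcal O_K)$. If $F$ is a symmetric Hilbert modular form for $\Gamma$ with $TF\neq0$, then $F,\Lambda F,\Pi_1F,\Pi_2F$ are algebraically independent over $\mathbb C$, and consequently $F,\Lambda F,\Pi F$ are algebraically independent over $\mathbb C$.
   Context: Hilbert modular forms of weight $(f_1,f_2)$: holomorphic $F$ on $\mathcal H^2$ with $F(\gamma\underline z)=(cz_1+d)^{f_1}(c'z_2+d')^{f_2}F(\underline z)$ for $\gamma\in\Gamma$; symmetric: $F(z_1,z_2)=F(z_2,z_1)$. $[F,G]_{1_i}=(2\pi i)^{-1}(g_iG\partial F/\partial z_i-f_iF\partial G/\partial z_i)$; $\Pi_iF=(2\pi i)^{-2}(f_iF\partial^2F/\partial z_i^2-(f_i+1)(\partial F/\partial z_i)^2)$, $\Pi F=\Pi_1F\Pi_2F$ (weight $4\underline f+(4,4)$), $\Lambda F=(2\pi i)^{-2}(F\partial^2F/\partial z_1\partial z_2-\partial_1F\partial_2F)$ (weight $2\underline f+(2,2)$), and $TF=[F,\Lambda F]_{1_1}[F,\Pi F]_{1_2}-[F,\Lambda F]_{1_2}[F,\Pi F]_{1_1}$. *)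

theory Defs
  imports "HOL-Complex_Analysis.Complex_Analysis" "HOL-Computational_Algebra.Squarefree"
begin

text \<open>An element of O_K is represented by its
integer coordinates (a,b) with respect to the Z-basis 1, omega, where omega = sqrt d
(d not 1 mod 4) or (1 + sqrt d)/2 (d = 1 mod 4).  emb1 and emb2 are the two real embeddings.\<close>

definition omega1 :: "int \<Rightarrow> real" where
  "omega1 d = (if d mod 4 = 1 then (1 + sqrt (real_of_int d)) / 2 else sqrt (real_of_int d))"

definition omega2 :: "int \<Rightarrow> real" where
  "omega2 d = (if d mod 4 = 1 then (1 - sqrt (real_of_int d)) / 2 else - sqrt (real_of_int d))"

definition emb1 :: "int \<Rightarrow> int \<times> int \<Rightarrow> real" where
  "emb1 d x = real_of_int (fst x) + real_of_int (snd x) * omega1 d"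

definition emb2 :: "int \<Rightarrow> int \<times> int \<Rightarrow> real" where
  "emb2 d x = real_of_int (fst x) + real_of_int (snd x) * omega2 d"

definition OK :: "int \<Rightarrow> real set" where
  "OK d = range (emb1 d)"

definition OK_ideal :: "int \<Rightarrow> real set \<Rightarrow> bool" where
  "OK_ideal d I \<longleftrightarrow> I \<subseteq> OK d \<and> 0 \<in> I \<and> (\<forall>x\<in>I. \<forall>y\<in>I. x + y \<in> I \<and> - x \<in> I)
      \<and> (\<forall>r\<in>OK d. \<forall>x\<in>I. r * x \<in> I)"

definition OK_principal :: "int \<Rightarrow> bool" where
  "OK_principal d \<longleftrightarrow> (\<forall>I. OK_ideal d I \<longrightarrow> (\<exists>x\<in>OK d. I = (\<lambda>y. x * y) ` OK d))"

type_synonym okmat = "(int \<times> int) \<times> (int \<times> int) \<times> (int \<times> int) \<times> (int \<times> int)"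

definition SL2_OK :: "int \<Rightarrow> okmat set" where
  "SL2_OK d = {(a, b, c, e). emb1 d a * emb1 d e - emb1 d b * emb1 d c = 1}"

definition upper_half :: "complex set" where
  "upper_half = {z. Im z > 0}"

definition mob :: "real \<Rightarrow> real \<Rightarrow> real \<Rightarrow> real \<Rightarrow> complex \<Rightarrow> complex" where
  "mob a b c e z = (of_real a * z + of_real b) / (of_real c * z + of_real e)"

text \<open>Hilbert modular form of weight (f1,f2) for SL_2(O_K): continuous on H^2, holomorphic in
each variable separately (equivalently holomorphic, by Osgood/Hartogs), with the transformation law.\<close>
definition hilbert_modular_form :: "int \<Rightarrow> int \<Rightarrow> int \<Rightarrow> (complex \<Rightarrow> complex \<Rightarrow> complex) \<Rightarrow> bool" where
  "hilbert_modular_form d f1 f2 F \<longleftrightarrow>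
     continuous_on (upper_half \<times> upper_half) (\<lambda>(z1, z2). F z1 z2) \<and>
     (\<forall>z2\<in>upper_half. (\<lambda>z1. F z1 z2) holomorphic_on upper_half) \<and>
     (\<forall>z1\<in>upper_half. (\<lambda>z2. F z1 z2) holomorphic_on upper_half) \<and>
     (\<forall>(a, b, c, e)\<in>SL2_OK d. \<forall>z1\<in>upper_half. \<forall>z2\<in>upper_half.
        F (mob (emb1 d a) (emb1 d b) (emb1 d c) (emb1 d e) z1)
          (mob (emb2 d a) (emb2 d b) (emb2 d c) (emb2 d e) z2)
        = (of_real (emb1 d c) * z1 + of_real (emb1 d e)) powi f1
          * (of_real (emb2 d c) * z2 + of_real (emb2 d e)) powi f2 * F z1 z2)"

definition symmetric_form :: "(complex \<Rightarrow> complex \<Rightarrow> complex) \<Rightarrow> bool" where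
  "symmetric_form F \<longleftrightarrow> (\<forall>z1\<in>upper_half. \<forall>z2\<in>upper_half. F z1 z2 = F z2 z1)"

definition pd1 :: "(complex \<Rightarrow> complex \<Rightarrow> complex) \<Rightarrow> complex \<Rightarrow> complex \<Rightarrow> complex" where
  "pd1 F = (\<lambda>z1 z2. deriv (\<lambda>w. F w z2) z1)"

definition pd2 :: "(complex \<Rightarrow> complex \<Rightarrow> complex) \<Rightarrow> complex \<Rightarrow> complex \<Rightarrow> complex" where
  "pd2 F = (\<lambda>z1 z2. deriv (\<lambda>w. F z1 w) z2)"

definition pd :: "nat \<Rightarrow> (complex \<Rightarrow> complex \<Rightarrow> complex) \<Rightarrow> complex \<Rightarrow> complex \<Rightarrow> complex" where
  "pd i F = (if i = 1 then pd1 F else pd2 F)"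

text \<open>[F,G]_{1_i} for F of weight with i-th component fi and G with i-th component gi.\<close>
definition bracket1 :: "nat \<Rightarrow> int \<Rightarrow> (complex \<Rightarrow> complex \<Rightarrow> complex) \<Rightarrow> int \<Rightarrow> (complex \<Rightarrow> complex \<Rightarrow> complex)
    \<Rightarrow> complex \<Rightarrow> complex \<Rightarrow> complex" where
  "bracket1 i fi F gi G = (\<lambda>z1 z2. inverse (2 * of_real pi * \<i>) *
      (of_int gi * G z1 z2 * pd i F z1 z2 - of_int fi * F z1 z2 * pd i G z1 z2))"

definition PiOp :: "nat \<Rightarrow> int \<Rightarrow> (complex \<Rightarrow> complex \<Rightarrow> complex) \<Rightarrow> complex \<Rightarrow> complex \<Rightarrow> complex" where
  "PiOp i fi F = (\<lambda>z1 z2. inverse ((2 * of_real pi * \<i>)\<^sup>2) *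
      (of_int fi * F z1 z2 * pd i (pd i F) z1 z2 - of_int (fi + 1) * (pd i F z1 z2)\<^sup>2))"

definition PiF :: "int \<Rightarrow> int \<Rightarrow> (complex \<Rightarrow> complex \<Rightarrow> complex) \<Rightarrow> complex \<Rightarrow> complex \<Rightarrow> complex" where
  "PiF f1 f2 F = (\<lambda>z1 z2. PiOp 1 f1 F z1 z2 * PiOp 2 f2 F z1 z2)"

definition LambdaF :: "(complex \<Rightarrow> complex \<Rightarrow> complex) \<Rightarrow> complex \<Rightarrow> complex \<Rightarrow> complex" where
  "LambdaF F = (\<lambda>z1 z2. inverse ((2 * of_real pi * \<i>)\<^sup>2) *
      (F z1 z2 * pd1 (pd2 F) z1 z2 - pd1 F z1 z2 * pd2 F z1 z2))"

text \<open>T F, with weights: F has (f1,f2), Lambda F has 2f+(2,2), Pi F has 4f+(4,4).\<close>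
definition TF :: "int \<Rightarrow> int \<Rightarrow> (complex \<Rightarrow> complex \<Rightarrow> complex) \<Rightarrow> complex \<Rightarrow> complex \<Rightarrow> complex" where
  "TF f1 f2 F = (\<lambda>z1 z2.
      bracket1 1 f1 F (2*f1+2) (LambdaF F) z1 z2 * bracket1 2 f2 F (4*f2+4) (PiF f1 f2 F) z1 z2
    - bracket1 2 f2 F (2*f2+2) (LambdaF F) z1 z2 * bracket1 1 f1 F (4*f1+4) (PiF f1 f2 F) z1 z2)"

text \<open>A polynomial in n variables over C is given by a finitely supported coefficient function
on exponent vectors (lists of length n).\<close>
definition poly_eval :: "(nat list \<Rightarrow> complex) \<Rightarrow> (complex \<Rightarrow> complex \<Rightarrow> complex) list \<Rightarrow> complex \<Rightarrow> complex \<Rightarrow> complex" where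
  "poly_eval c gs z1 z2 = (\<Sum>\<alpha>\<in>{\<alpha>. c \<alpha> \<noteq> 0}. c \<alpha> * (\<Prod>i<length gs. (gs ! i) z1 z2 ^ (\<alpha> ! i)))"

definition alg_indep :: "(complex \<Rightarrow> complex \<Rightarrow> complex) list \<Rightarrow> bool" where
  "alg_indep gs \<longleftrightarrow> (\<forall>c :: nat list \<Rightarrow> complex.
      finite {\<alpha>. c \<alpha> \<noteq> 0} \<longrightarrow> (\<forall>\<alpha>. c \<alpha> \<noteq> 0 \<longrightarrow> length \<alpha> = length gs) \<longrightarrow>
      (\<exists>\<alpha>. c \<alpha> \<noteq> 0) \<longrightarrow>
      (\<exists>z1\<in>upper_half. \<exists>z2\<in>upper_half. poly_eval c gs z1 z2 \<noteq> 0))"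

end

theory Submission
  imports Defs "HOL-Computational_Algebra.Polynomial"
begin

text \<open>Only the lower unipotent matrices \<open>((1, 0), (x, 1))\<close>, \<open>x \<in> \<O>\<^sub>K\<close>, are used. Under them
  \<open>F\<close>, \<open>\<Lambda>F\<close>, \<open>\<Pi>\<^sub>1F\<close>, \<open>\<Pi>\<^sub>2F\<close> and \<open>\<Pi>F\<close> transform by factors \<open>(x z\<^sub>1 + 1)\<^sup>k (x' z\<^sub>2 + 1)\<^sup>l\<close>; as functions of
  \<open>x\<close> these are linearly independent for distinct \<open>(k, l)\<close>, so every algebraic relation splits
  into bihomogeneous ones. Differentiating a bihomogeneous relation \<open>P(F, \<Lambda>F, \<Pi>F) = 0\<close> in \<open>z\<^sub>1\<close>
  and in \<open>z\<^sub>2\<close> and adding the two Euler identities gives a linear system for the partial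
  derivatives of \<open>P\<close> whose determinant is \<open>T F\<close>. Hence \<open>\<partial>P/\<partial>\<Lambda>\<close> and \<open>\<partial>P/\<partial>\<Pi>\<close> are relations of
  lower degree, so is \<open>\<partial>P/\<partial>F\<close> near a point where \<open>\<partial>F \<noteq> 0\<close>, and induction on the degree leaves
  only constant \<open>P\<close>. Symmetry of \<open>F\<close> forces \<open>f\<^sub>1 = f\<^sub>2\<close>; then a bihomogeneous relation between
  \<open>F, \<Lambda>F, \<Pi>\<^sub>1F, \<Pi>\<^sub>2F\<close> is \<open>\<Pi>\<^sub>1\<^sup>a \<Pi>\<^sub>2\<^sup>b\<close> times a relation between \<open>F, \<Lambda>F, \<Pi>F\<close>.\<close>

section \<open>Continuous, separately holomorphic functions on H x H\<close>

lemma open_upper_half: "open upper_half"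
  unfolding upper_half_def by (rule open_halfspace_Im_gt)

lemma convex_upper_half: "convex upper_half"
  unfolding upper_half_def by (rule convex_halfspace_Im_gt)

lemma open_upper_half2: "open (upper_half \<times> upper_half)"
  by (simp add: open_Times open_upper_half)

definition holomorphic_H2 :: "(complex \<Rightarrow> complex \<Rightarrow> complex) \<Rightarrow> bool" where
  "holomorphic_H2 G \<longleftrightarrow> continuous_on (upper_half \<times> upper_half) (\<lambda>(a, b). G a b) \<and>
     (\<forall>z2\<in>upper_half. (\<lambda>z1. G z1 z2) holomorphic_on upper_half) \<and>
     (\<forall>z1\<in>upper_half. (\<lambda>z2. G z1 z2) holomorphic_on upper_half)"

definition swap_args :: "(complex \<Rightarrow> complex \<Rightarrow> complex) \<Rightarrow> complex \<Rightarrow> complex \<Rightarrow> complex" where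
  "swap_args G = (\<lambda>a b. G b a)"

lemma holomorphic_H2_continuous:
  "holomorphic_H2 G \<Longrightarrow> continuous_on (upper_half \<times> upper_half) (\<lambda>(a, b). G a b)"
  by (simp add: holomorphic_H2_def)

lemma holomorphic_H2_swap_args: "holomorphic_H2 G \<Longrightarrow> holomorphic_H2 (swap_args G)"
proof -
  assume G: "holomorphic_H2 G"
  have "continuous_on (upper_half \<times> upper_half) (\<lambda>x. (\<lambda>(a, b). G a b) (prod.swap x))"
    by (rule continuous_on_compose2[OF holomorphic_H2_continuous[OF G]]) (auto intro!: continuous_intros)
  then show ?thesis
    using G by (simp add: holomorphic_H2_def swap_args_def case_prod_unfold)
qed

lemma pd2_eq_swap_args: "pd2 G = swap_args (pd1 (swap_args G))"
  by (simp add: pd1_def pd2_def swap_args_def)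

lemma has_field_derivative_pd1:
  assumes "holomorphic_H2 G" "z1 \<in> upper_half" "z2 \<in> upper_half"
  shows "((\<lambda>w. G w z2) has_field_derivative pd1 G z1 z2) (at z1 within T)"
proof -
  have "(\<lambda>w. G w z2) holomorphic_on upper_half" using assms holomorphic_H2_def by blast
  from holomorphic_derivI[OF this open_upper_half assms(2)] show ?thesis by (simp add: pd1_def)
qed

lemma has_field_derivative_pd2:
  assumes "holomorphic_H2 G" "z1 \<in> upper_half" "z2 \<in> upper_half"
  shows "((\<lambda>w. G z1 w) has_field_derivative pd2 G z1 z2) (at z2 within T)"
proof -
  have "(\<lambda>w. G z1 w) holomorphic_on upper_half" using assms holomorphic_H2_def by blast
  from holomorphic_derivI[OF this open_upper_half assms(3)] show ?thesis by (simp add: pd2_def)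
qed

lemma continuous_on_circlepath [continuous_intros]: "continuous_on S (circlepath p r)"
  unfolding circlepath by (intro continuous_intros)

lemma pd1_eq_circle_integral:
  assumes "holomorphic_H2 G" "r > 0" "cball p r \<subseteq> upper_half" "z1 \<in> ball p r" "z2 \<in> upper_half"
  shows "pd1 G z1 z2 = integral {0..1} (\<lambda>t. G (circlepath p r t) z2 / (circlepath p r t - z1)\<^sup>2
           * (2 * pi * \<i> * r * exp (2 * pi * \<i> * t))) / (2 * pi * \<i>)"
proof -
  have hol: "(\<lambda>w. G w z2) holomorphic_on upper_half" using assms holomorphic_H2_def by blast
  have hol_cball: "(\<lambda>w. G w z2) holomorphic_on cball p r"
    using hol assms(3) by (rule holomorphic_on_subset)
  have "((\<lambda>u. G u z2 / (u - z1) ^ Suc 1) has_contour_integral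
      (2 * pi * \<i> / fact 1 * (deriv ^^ 1) (\<lambda>w. G w z2) z1)) (circlepath p r)"
    by (intro Cauchy_has_contour_integral_higher_derivative_circlepath assms(2,4)
        holomorphic_on_imp_continuous_on hol_cball holomorphic_on_subset[OF hol_cball ball_subset_cball])
  then have "((\<lambda>u. G u z2 / (u - z1)\<^sup>2) has_contour_integral (2 * pi * \<i> * pd1 G z1 z2)) (circlepath p r)"
    unfolding Suc_1 by (simp add: pd1_def)
  then have "contour_integral (circlepath p r) (\<lambda>u. G u z2 / (u - z1)\<^sup>2) = 2 * pi * \<i> * pd1 G z1 z2"
    by (rule contour_integral_unique)
  then show ?thesis
    unfolding contour_integral_integral vector_derivative_circlepath by (simp add: cbox_interval)
qed

lemma continuous_on_pd1:
  assumes G: "holomorphic_H2 G"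
  shows "continuous_on (upper_half \<times> upper_half) (\<lambda>(a, b). pd1 G a b)"
  unfolding continuous_on_eq_continuous_at[OF open_upper_half2]
proof
  fix x assume "x \<in> upper_half \<times> upper_half"
  then obtain p q where x: "x = (p, q)" and p: "p \<in> upper_half" and q: "q \<in> upper_half" by auto
  obtain r where r: "r > 0" "cball p r \<subseteq> upper_half"
    using open_contains_cball open_upper_half p by blast
  define U where "U = ball p r \<times> upper_half"
  have on_circle: "circlepath p r t \<in> upper_half" for t
    using r by (auto simp: circlepath dist_norm norm_mult)
  have off_centre: "circlepath p r t \<noteq> fst y" if "y \<in> U" for y t
    using that r by (auto simp: U_def circlepath dist_norm norm_mult)
  have "continuous_on (U \<times> cbox 0 1) (\<lambda>x. (\<lambda>(a, b). G a b) ((\<lambda>(y, t). (circlepath p r t, snd y)) x))"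
    by (rule continuous_on_compose2[OF holomorphic_H2_continuous[OF G]])
       (auto simp: U_def on_circle case_prod_unfold intro!: continuous_intros
          continuous_on_compose2[OF continuous_on_circlepath])
  then have "continuous_on (U \<times> cbox 0 1) (\<lambda>(y, t). G (circlepath p r t) (snd y)
      / (circlepath p r t - fst y)\<^sup>2 * (2 * pi * \<i> * r * exp (2 * pi * \<i> * t)))"
    using off_centre by (auto simp: case_prod_unfold intro!: continuous_intros
        continuous_on_compose2[OF continuous_on_circlepath])
  then have "continuous_on U (\<lambda>y. integral (cbox 0 1) (\<lambda>t. G (circlepath p r t) (snd y)
      / (circlepath p r t - fst y)\<^sup>2 * (2 * pi * \<i> * r * exp (2 * pi * \<i> * t))) / (2 * pi * \<i>))"
    by (intro continuous_intros integral_continuous_on_param) auto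
  then have "continuous_on U (\<lambda>(a, b). pd1 G a b)"
    by (rule continuous_on_eq) (auto simp: U_def cbox_interval pd1_eq_circle_integral[OF G r])
  moreover have "open U" "x \<in> U"
    using r q x by (auto simp: U_def open_Times open_upper_half)
  ultimately show "isCont (\<lambda>(a, b). pd1 G a b) x"
    using continuous_on_eq_continuous_at by blast
qed

lemma continuous_on_pd2:
  assumes "holomorphic_H2 G"
  shows "continuous_on (upper_half \<times> upper_half) (\<lambda>(a, b). pd2 G a b)"
proof -
  have "continuous_on (upper_half \<times> upper_half)
      (\<lambda>x. (\<lambda>(a, b). pd1 (swap_args G) a b) (prod.swap x))"
    by (rule continuous_on_compose2[OF continuous_on_pd1[OF holomorphic_H2_swap_args[OF assms]]])
       (auto intro!: continuous_intros)
  then show ?thesis by (simp add: pd2_eq_swap_args swap_args_def case_prod_unfold)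
qed

text \<open>Differentiate the Cauchy integral for \<open>pd1 G\<close> under the integral sign; this needs the
  joint continuity of \<open>pd2 G\<close>.\<close>
lemma pd1_holomorphic_in_snd:
  assumes G: "holomorphic_H2 G" and z1: "z1 \<in> upper_half"
  shows "(\<lambda>z2. pd1 G z1 z2) holomorphic_on upper_half"
proof -
  obtain r where r: "r > 0" "cball z1 r \<subseteq> upper_half"
    using open_contains_cball open_upper_half z1 by blast
  define \<gamma>' where "\<gamma>' t = 2 * pi * \<i> * r * exp (2 * pi * \<i> * t)" for t :: real
  have on_circle: "circlepath z1 r t \<in> upper_half" for t
    using r by (auto simp: circlepath dist_norm norm_mult)
  have off_centre: "circlepath z1 r t \<noteq> z1" "circlepath z1 r t - z1 \<noteq> 0" for t
    using r by (auto simp: circlepath)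
  have "(\<lambda>x. integral (cbox 0 1) (\<lambda>t. G (circlepath z1 r t) x / (circlepath z1 r t - z1)\<^sup>2 * \<gamma>' t))
      holomorphic_on upper_half"
  proof (rule leibniz_rule_holomorphic[OF _ _ _ convex_upper_half])
    fix x t assume x: "x \<in> upper_half"
    show "((\<lambda>x. G (circlepath z1 r t) x / (circlepath z1 r t - z1)\<^sup>2 * \<gamma>' t) has_field_derivative
        pd2 G (circlepath z1 r t) x / (circlepath z1 r t - z1)\<^sup>2 * \<gamma>' t) (at x within upper_half)"
      using DERIV_cmult_right[OF has_field_derivative_pd2[OF G on_circle x],
          where c = "\<gamma>' t / (circlepath z1 r t - z1)\<^sup>2"]
      by (simp add: field_simps off_centre)
  next
    fix x assume x: "x \<in> upper_half"
    have "continuous_on (cbox 0 1) (\<lambda>t. (\<lambda>(a, b). G a b) (circlepath z1 r t, x))"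
      by (rule continuous_on_compose2[OF holomorphic_H2_continuous[OF G]])
         (auto intro!: continuous_intros simp: on_circle x)
    then show "(\<lambda>t. G (circlepath z1 r t) x / (circlepath z1 r t - z1)\<^sup>2 * \<gamma>' t) integrable_on cbox 0 1"
      using off_centre unfolding \<gamma>'_def
      by (intro integrable_continuous continuous_intros) auto
  next
    have "continuous_on (upper_half \<times> cbox 0 1)
        (\<lambda>y. (\<lambda>(a, b). pd2 G a b) ((\<lambda>(x, t). (circlepath z1 r t, x)) y))"
      by (rule continuous_on_compose2[OF continuous_on_pd2[OF G]])
         (auto simp: case_prod_unfold on_circle intro!: continuous_intros
           continuous_on_compose2[OF continuous_on_circlepath])
    then show "continuous_on (upper_half \<times> cbox 0 1)
        (\<lambda>(x, t). pd2 G (circlepath z1 r t) x / (circlepath z1 r t - z1)\<^sup>2 * \<gamma>' t)"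
      using off_centre unfolding \<gamma>'_def
      by (auto simp: case_prod_unfold intro!: continuous_intros continuous_on_compose2[OF continuous_on_circlepath])
  qed
  then have "(\<lambda>x. integral (cbox 0 1) (\<lambda>t. G (circlepath z1 r t) x / (circlepath z1 r t - z1)\<^sup>2 * \<gamma>' t)
      / (2 * pi * \<i>)) holomorphic_on upper_half"
    by (intro holomorphic_intros) auto
  then show ?thesis
    by (rule holomorphic_transform)
       (simp add: pd1_eq_circle_integral[OF G r] r(1) z1 \<gamma>'_def cbox_interval)
qed

lemma holomorphic_H2_pd1: "holomorphic_H2 G \<Longrightarrow> holomorphic_H2 (pd1 G)"
  using holomorphic_deriv[OF _ open_upper_half] continuous_on_pd1 pd1_holomorphic_in_snd
  by (auto simp: holomorphic_H2_def pd1_def)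

lemma holomorphic_H2_pd2: "holomorphic_H2 G \<Longrightarrow> holomorphic_H2 (pd2 G)"
  unfolding pd2_eq_swap_args by (intro holomorphic_H2_swap_args holomorphic_H2_pd1)

lemma holomorphic_H2_pd: "holomorphic_H2 G \<Longrightarrow> holomorphic_H2 (pd i G)"
  by (simp add: pd_def holomorphic_H2_pd1 holomorphic_H2_pd2)

lemma holomorphic_H2_const: "holomorphic_H2 (\<lambda>a b. k)"
  unfolding holomorphic_H2_def by (auto intro!: continuous_intros)

lemma holomorphic_H2_diff:
  "holomorphic_H2 F \<Longrightarrow> holomorphic_H2 G \<Longrightarrow> holomorphic_H2 (\<lambda>a b. F a b - G a b)"
  unfolding holomorphic_H2_def case_prod_unfold by (auto intro!: continuous_intros holomorphic_intros)

lemma holomorphic_H2_mult: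
  "holomorphic_H2 F \<Longrightarrow> holomorphic_H2 G \<Longrightarrow> holomorphic_H2 (\<lambda>a b. F a b * G a b)"
  unfolding holomorphic_H2_def case_prod_unfold by (auto intro!: continuous_intros holomorphic_intros)

lemma holomorphic_H2_power: "holomorphic_H2 F \<Longrightarrow> holomorphic_H2 (\<lambda>a b. F a b ^ n)"
  unfolding holomorphic_H2_def case_prod_unfold by (auto intro!: continuous_intros holomorphic_intros)

lemmas holomorphic_H2_intros =
  holomorphic_H2_const holomorphic_H2_diff holomorphic_H2_mult holomorphic_H2_power holomorphic_H2_pd
  holomorphic_H2_pd1 holomorphic_H2_pd2

lemma holomorphic_H2_LambdaF: "holomorphic_H2 F \<Longrightarrow> holomorphic_H2 (LambdaF F)"
  unfolding LambdaF_def by (intro holomorphic_H2_intros)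

lemma holomorphic_H2_PiOp: "holomorphic_H2 F \<Longrightarrow> holomorphic_H2 (PiOp i k F)"
  unfolding PiOp_def by (intro holomorphic_H2_intros)

lemma holomorphic_H2_PiF: "holomorphic_H2 F \<Longrightarrow> holomorphic_H2 (PiF f1 f2 F)"
  unfolding PiF_def by (intro holomorphic_H2_intros holomorphic_H2_PiOp)

lemma holomorphic_H2_bracket1:
  "holomorphic_H2 F \<Longrightarrow> holomorphic_H2 G \<Longrightarrow> holomorphic_H2 (bracket1 i fi F gi G)"
  unfolding bracket1_def by (intro holomorphic_H2_intros)

lemma holomorphic_H2_TF: "holomorphic_H2 F \<Longrightarrow> holomorphic_H2 (TF f1 f2 F)"
  unfolding TF_def
  by (intro holomorphic_H2_intros holomorphic_H2_bracket1 holomorphic_H2_LambdaF holomorphic_H2_PiF)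

lemma open_nonzero_set:
  assumes "holomorphic_H2 G"
  shows "open {(a, b) \<in> upper_half \<times> upper_half. G a b \<noteq> 0}"
proof -
  have "open ((upper_half \<times> upper_half) \<inter> (\<lambda>(a, b). G a b) -` (- {0}))"
    by (intro continuous_open_preimage[OF holomorphic_H2_continuous[OF assms]])
       (auto simp: open_upper_half2)
  moreover have "(upper_half \<times> upper_half) \<inter> (\<lambda>(a, b). G a b) -` (- {0})
      = {(a, b) \<in> upper_half \<times> upper_half. G a b \<noteq> 0}"
    by auto
  ultimately show ?thesis by simp
qed

lemma pd1_eq_0_on_open:
  assumes "open V" "\<And>x y. (x, y) \<in> V \<Longrightarrow> G x y = 0" "(a, b) \<in> V"
  shows "pd1 G a b = 0"
proof -
  have "open ((\<lambda>w. (w, b)) -` V)"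
    by (rule continuous_open_vimage[OF assms(1)]) (intro continuous_intros)
  then have "((\<lambda>w. G w b) has_field_derivative 0) (at a)"
    by (rule has_field_derivative_transform_within_open[OF DERIV_const]) (use assms in auto)
  then show ?thesis unfolding pd1_def by (rule DERIV_imp_deriv)
qed

lemma pd2_eq_0_on_open:
  assumes "open V" "\<And>x y. (x, y) \<in> V \<Longrightarrow> G x y = 0" "(a, b) \<in> V"
  shows "pd2 G a b = 0"
proof -
  have "open ((\<lambda>w. (a, w)) -` V)"
    by (rule continuous_open_vimage[OF assms(1)]) (intro continuous_intros)
  then have "((\<lambda>w. G a w) has_field_derivative 0) (at b)"
    by (rule has_field_derivative_transform_within_open[OF DERIV_const]) (use assms in auto)
  then show ?thesis unfolding pd2_def by (rule DERIV_imp_deriv)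
qed

lemma pd_1 [simp]: "pd 1 G = pd1 G"
  by (simp add: pd_def)

lemma pd_2 [simp]: "pd 2 G = pd2 G"
  by (simp add: pd_def)

lemma pd_eq_0_on_open:
  "open V \<Longrightarrow> (\<And>x y. (x, y) \<in> V \<Longrightarrow> G x y = 0) \<Longrightarrow> (a, b) \<in> V \<Longrightarrow> pd i G a b = 0"
  by (simp add: pd_def pd1_eq_0_on_open pd2_eq_0_on_open)

lemma bracket1_eq_0_on_open:
  assumes "open V" "(a, b) \<in> V"
    and "(\<forall>(x, y) \<in> V. F x y = 0) \<or> (\<forall>(x, y) \<in> V. G x y = 0)"
  shows "bracket1 i fi F gi G a b = 0"
  using assms(3)
proof (elim disjE)
  assume "\<forall>(x, y) \<in> V. F x y = 0"
  then have "\<And>x y. (x, y) \<in> V \<Longrightarrow> F x y = 0" by auto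
  then have "F a b = 0" "pd i F a b = 0"
    using assms(2) pd_eq_0_on_open[OF assms(1)] by auto
  then show ?thesis by (simp add: bracket1_def)
next
  assume "\<forall>(x, y) \<in> V. G x y = 0"
  then have "\<And>x y. (x, y) \<in> V \<Longrightarrow> G x y = 0" by auto
  then have "G a b = 0" "pd i G a b = 0"
    using assms(2) pd_eq_0_on_open[OF assms(1)] by auto
  then show ?thesis by (simp add: bracket1_def)
qed

lemma TF_eq_0_on_open:
  assumes "open V" "(a, b) \<in> V"
    and "(\<forall>(x, y) \<in> V. F x y = 0) \<or> (\<forall>(x, y) \<in> V. LambdaF F x y = 0) \<or> (\<forall>(x, y) \<in> V. PiF f1 f2 F x y = 0)"
  shows "TF f1 f2 F a b = 0"
  using assms bracket1_eq_0_on_open[OF assms(1,2)] by (auto simp: TF_def)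

lemma LambdaF_eq_0_on_open:
  assumes "open V" "\<And>x y. (x, y) \<in> V \<Longrightarrow> pd1 F x y = 0 \<and> pd2 F x y = 0" "(a, b) \<in> V"
  shows "LambdaF F a b = 0"
  using assms pd1_eq_0_on_open[OF assms(1), of "pd2 F"] by (simp add: LambdaF_def)

section \<open>The action of lower unipotent matrices\<close>

text \<open>The matrix \<open>((1, 0), (c, 1))\<close> acts by \<open>shear c\<close> with automorphy factor \<open>shear_factor c\<close>.\<close>

definition shear_factor :: "real \<Rightarrow> complex \<Rightarrow> complex" where
  "shear_factor c z = of_real c * z + 1"

definition shear :: "real \<Rightarrow> complex \<Rightarrow> complex" where
  "shear c z = z / shear_factor c z"

definition shear_automorphic ::
    "(complex \<Rightarrow> complex \<Rightarrow> complex) \<Rightarrow> int \<Rightarrow> int \<Rightarrow> real \<Rightarrow> real \<Rightarrow> bool" where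
  "shear_automorphic G k1 k2 c1 c2 \<longleftrightarrow> (\<forall>z1\<in>upper_half. \<forall>z2\<in>upper_half.
     G (shear c1 z1) (shear c2 z2) = shear_factor c1 z1 powi k1 * shear_factor c2 z2 powi k2 * G z1 z2)"

lemma shear_factor_nonzero: "z \<in> upper_half \<Longrightarrow> shear_factor c z \<noteq> 0"
  by (auto simp: shear_factor_def upper_half_def complex_eq_iff)

lemma shear_in_upper_half:
  assumes "z \<in> upper_half"
  shows "shear c z \<in> upper_half"
proof -
  have "Im (shear c z) = Im z / ((Re (shear_factor c z))\<^sup>2 + (Im (shear_factor c z))\<^sup>2)"
    by (simp add: shear_def Im_divide shear_factor_def algebra_simps power2_eq_square)
  then show ?thesis
    using assms shear_factor_nonzero[OF assms, of c] by (simp add: upper_half_def complex_neq_0)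
qed

lemma has_field_derivative_shear_factor:
  "(shear_factor c has_field_derivative of_real c) (at z)"
  unfolding shear_factor_def[abs_def] by (auto intro!: derivative_eq_intros)

lemma has_field_derivative_shear:
  assumes "z \<in> upper_half"
  shows "(shear c has_field_derivative 1 / (shear_factor c z)\<^sup>2) (at z)"
  using shear_factor_nonzero[OF assms, of c] unfolding shear_def[abs_def] shear_factor_def
  by (auto intro!: derivative_eq_intros simp: field_simps power2_eq_square)

lemma shear_automorphic_swap_args:
  "shear_automorphic G k1 k2 c1 c2 \<Longrightarrow> shear_automorphic (swap_args G) k2 k1 c2 c1"
  by (simp add: shear_automorphic_def swap_args_def)

lemma shear_automorphic_mult:
  "shear_automorphic G k1 k2 c1 c2 \<Longrightarrow> shear_automorphic H l1 l2 c1 c2 \<Longrightarrow>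
    shear_automorphic (\<lambda>a b. G a b * H a b) (k1 + l1) (k2 + l2) c1 c2"
  by (simp add: shear_automorphic_def shear_factor_nonzero power_int_add)

lemma pd1_at_shear:
  assumes G: "holomorphic_H2 G"
    and R: "\<And>z1 z2. z1 \<in> upper_half \<Longrightarrow> z2 \<in> upper_half \<Longrightarrow> G (shear c1 z1) (shear c2 z2) = R z1 z2"
    and z: "z1 \<in> upper_half" "z2 \<in> upper_half"
    and R1: "((\<lambda>w. R w z2) has_field_derivative R1) (at z1)"
  shows "pd1 G (shear c1 z1) (shear c2 z2) = (shear_factor c1 z1)\<^sup>2 * R1"
proof -
  have "((\<lambda>w. G (shear c1 w) (shear c2 z2)) has_field_derivative
      pd1 G (shear c1 z1) (shear c2 z2) * (1 / (shear_factor c1 z1)\<^sup>2)) (at z1)"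
    using has_field_derivative_pd1[OF G shear_in_upper_half shear_in_upper_half] z
    by (intro DERIV_chain2[OF _ has_field_derivative_shear]) auto
  then have "((\<lambda>w. R w z2) has_field_derivative
      pd1 G (shear c1 z1) (shear c2 z2) * (1 / (shear_factor c1 z1)\<^sup>2)) (at z1)"
    by (rule has_field_derivative_transform_within_open[OF _ open_upper_half z(1)]) (use R z in auto)
  from DERIV_unique[OF this R1] show ?thesis
    using shear_factor_nonzero[OF z(1), of c1] by (simp add: field_simps)
qed

lemma power_int_mult_add_nat:
  fixes x :: "'a :: division_ring"
  assumes "x \<noteq> 0"
  shows "x powi (of_nat m * f + of_nat k) = (x powi f) ^ m * x ^ k"
  using assms by (simp add: power_int_add mult.commute[of "of_nat m"] power_int_mult)

locale shear_modular =
  fixes F :: "complex \<Rightarrow> complex \<Rightarrow> complex" and f1 f2 :: int and c1 c2 :: real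
  assumes holomorphic: "holomorphic_H2 F"
    and automorphic: "shear_automorphic F f1 f2 c1 c2"
begin

lemma swap: "shear_modular (swap_args F) f2 f1 c2 c1"
  using holomorphic automorphic
  by unfold_locales (auto intro: holomorphic_H2_swap_args shear_automorphic_swap_args)

lemma F_at_shear:
  "z1 \<in> upper_half \<Longrightarrow> z2 \<in> upper_half \<Longrightarrow>
    F (shear c1 z1) (shear c2 z2) = shear_factor c1 z1 powi f1 * shear_factor c2 z2 powi f2 * F z1 z2"
  using automorphic by (simp add: shear_automorphic_def)

lemma pd1_F_at_shear:
  assumes z: "z1 \<in> upper_half" "z2 \<in> upper_half"
  shows "pd1 F (shear c1 z1) (shear c2 z2) = (shear_factor c1 z1)\<^sup>2
     * (shear_factor c1 z1 powi f1 * shear_factor c2 z2 powi f2)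
     * (pd1 F z1 z2 + of_int f1 * (of_real c1 / shear_factor c1 z1) * F z1 z2)"
proof -
  have n: "shear_factor c1 z1 \<noteq> 0" by (rule shear_factor_nonzero[OF z(1)])
  have "((\<lambda>w. shear_factor c1 w powi f1 * shear_factor c2 z2 powi f2 * F w z2) has_field_derivative
      of_int f1 * shear_factor c1 z1 powi (f1 - 1) * of_real c1 * shear_factor c2 z2 powi f2 * F z1 z2
      + shear_factor c1 z1 powi f1 * shear_factor c2 z2 powi f2 * pd1 F z1 z2) (at z1)"
    using n by (auto intro!: derivative_eq_intros has_field_derivative_shear_factor
        has_field_derivative_pd1[OF holomorphic z])
  from pd1_at_shear[OF holomorphic F_at_shear z this] show ?thesis
    using n by (simp add: power_int_diff field_simps)
qed

lemma pd2_F_at_shear: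
  assumes z: "z1 \<in> upper_half" "z2 \<in> upper_half"
  shows "pd2 F (shear c1 z1) (shear c2 z2) = (shear_factor c2 z2)\<^sup>2
     * (shear_factor c1 z1 powi f1 * shear_factor c2 z2 powi f2)
     * (pd2 F z1 z2 + of_int f2 * (of_real c2 / shear_factor c2 z2) * F z1 z2)"
proof -
  interpret swapped: shear_modular "swap_args F" f2 f1 c2 c1 by (rule swap)
  show ?thesis
    using swapped.pd1_F_at_shear[OF z(2,1)] by (simp add: pd2_eq_swap_args swap_args_def mult_ac)
qed

lemma pd11_F_at_shear:
  assumes z: "z1 \<in> upper_half" "z2 \<in> upper_half"
  shows "pd1 (pd1 F) (shear c1 z1) (shear c2 z2) = (shear_factor c1 z1)^4
     * (shear_factor c1 z1 powi f1 * shear_factor c2 z2 powi f2)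
     * (pd1 (pd1 F) z1 z2 + 2 * of_int (f1 + 1) * (of_real c1 / shear_factor c1 z1) * pd1 F z1 z2
        + of_int f1 * of_int (f1 + 1) * (of_real c1 / shear_factor c1 z1)\<^sup>2 * F z1 z2)"
proof -
  have n: "shear_factor c1 z1 \<noteq> 0" by (rule shear_factor_nonzero[OF z(1)])
  have "((\<lambda>w. (shear_factor c1 w)\<^sup>2 * (shear_factor c1 w powi f1 * shear_factor c2 z2 powi f2)
       * (pd1 F w z2 + of_int f1 * (of_real c1 / shear_factor c1 w) * F w z2)) has_field_derivative
     (shear_factor c1 z1)\<^sup>2 * (shear_factor c1 z1 powi f1 * shear_factor c2 z2 powi f2)
     * (pd1 (pd1 F) z1 z2 + 2 * of_int (f1 + 1) * (of_real c1 / shear_factor c1 z1) * pd1 F z1 z2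
        + of_int f1 * of_int (f1 + 1) * (of_real c1 / shear_factor c1 z1)\<^sup>2 * F z1 z2)) (at z1)"
    using n
    by (auto intro!: derivative_eq_intros has_field_derivative_shear_factor
        has_field_derivative_pd1[OF holomorphic z] has_field_derivative_pd1[OF holomorphic_H2_pd1[OF holomorphic] z];
        simp add: power_int_diff divide_simps; simp add: algebra_simps power2_eq_square power4_eq_xxxx)
  from pd1_at_shear[OF holomorphic_H2_pd1[OF holomorphic] pd1_F_at_shear z this] show ?thesis
    using n by (simp add: field_simps)
qed


lemma pd12_F_at_shear:
  assumes z: "z1 \<in> upper_half" "z2 \<in> upper_half"
  shows "pd1 (pd2 F) (shear c1 z1) (shear c2 z2) = (shear_factor c1 z1)\<^sup>2 * (shear_factor c2 z2)\<^sup>2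
     * (shear_factor c1 z1 powi f1 * shear_factor c2 z2 powi f2)
     * (pd1 (pd2 F) z1 z2 + of_int f1 * (of_real c1 / shear_factor c1 z1) * pd2 F z1 z2
        + of_int f2 * (of_real c2 / shear_factor c2 z2) * pd1 F z1 z2
        + of_int f1 * of_int f2 * (of_real c1 / shear_factor c1 z1) * (of_real c2 / shear_factor c2 z2) * F z1 z2)"
proof -
  have n: "shear_factor c1 z1 \<noteq> 0" "shear_factor c2 z2 \<noteq> 0"
    using shear_factor_nonzero z by auto
  have "((\<lambda>w. (shear_factor c2 z2)\<^sup>2 * (shear_factor c1 w powi f1 * shear_factor c2 z2 powi f2)
       * (pd2 F w z2 + of_int f2 * (of_real c2 / shear_factor c2 z2) * F w z2)) has_field_derivative
     (shear_factor c2 z2)\<^sup>2 * (shear_factor c1 z1 powi f1 * shear_factor c2 z2 powi f2)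
     * (pd1 (pd2 F) z1 z2 + of_int f1 * (of_real c1 / shear_factor c1 z1) * pd2 F z1 z2
        + of_int f2 * (of_real c2 / shear_factor c2 z2) * pd1 F z1 z2
        + of_int f1 * of_int f2 * (of_real c1 / shear_factor c1 z1) * (of_real c2 / shear_factor c2 z2) * F z1 z2))
     (at z1)"
    using n
    by (auto intro!: derivative_eq_intros has_field_derivative_shear_factor
        has_field_derivative_pd1[OF holomorphic z] has_field_derivative_pd1[OF holomorphic_H2_pd2[OF holomorphic] z];
        simp add: power_int_diff divide_simps; simp add: algebra_simps)
  from pd1_at_shear[OF holomorphic_H2_pd2[OF holomorphic] pd2_F_at_shear z this] show ?thesis
    by (simp add: mult_ac)
qed

lemma shear_automorphic_LambdaF: "shear_automorphic (LambdaF F) (2 * f1 + 2) (2 * f2 + 2) c1 c2"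
  unfolding shear_automorphic_def
proof (intro ballI)
  fix z1 z2 assume z: "z1 \<in> upper_half" "z2 \<in> upper_half"
  have n: "shear_factor c1 z1 \<noteq> 0" "shear_factor c2 z2 \<noteq> 0"
    using shear_factor_nonzero z by auto
  show "LambdaF F (shear c1 z1) (shear c2 z2)
      = shear_factor c1 z1 powi (2 * f1 + 2) * shear_factor c2 z2 powi (2 * f2 + 2) * LambdaF F z1 z2"
    unfolding LambdaF_def F_at_shear[OF z] pd1_F_at_shear[OF z] pd2_F_at_shear[OF z] pd12_F_at_shear[OF z]
      power_int_mult_add_nat[OF n(1), of 2 _ 2, simplified] power_int_mult_add_nat[OF n(2), of 2 _ 2, simplified]
    by (simp add: algebra_simps power2_eq_square)
qed

lemma shear_automorphic_PiOp1: "shear_automorphic (PiOp 1 f1 F) (2 * f1 + 4) (2 * f2) c1 c2"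
  unfolding shear_automorphic_def
proof (intro ballI)
  fix z1 z2 assume z: "z1 \<in> upper_half" "z2 \<in> upper_half"
  have n: "shear_factor c1 z1 \<noteq> 0" "shear_factor c2 z2 \<noteq> 0"
    using shear_factor_nonzero z by auto
  define a where "a = of_real c1 / shear_factor c1 z1"
  show "PiOp 1 f1 F (shear c1 z1) (shear c2 z2)
      = shear_factor c1 z1 powi (2 * f1 + 4) * shear_factor c2 z2 powi (2 * f2) * PiOp 1 f1 F z1 z2"
    unfolding PiOp_def pd_1 F_at_shear[OF z] pd1_F_at_shear[OF z] pd11_F_at_shear[OF z] a_def[symmetric]
      power_int_mult_add_nat[OF n(1), of 2 _ 4, simplified] power_int_mult_add_nat[OF n(2), of 2 _ 0, simplified]
    by (simp add: algebra_simps power2_eq_square power4_eq_xxxx)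
qed

end

lemma PiOp2_eq_swap_args: "PiOp 2 f F = swap_args (PiOp 1 f (swap_args F))"
  by (simp add: PiOp_def pd_def pd2_eq_swap_args fun_eq_iff) (simp add: swap_args_def)

context shear_modular
begin

lemma shear_automorphic_PiOp2: "shear_automorphic (PiOp 2 f2 F) (2 * f1) (2 * f2 + 4) c1 c2"
proof -
  interpret swapped: shear_modular "swap_args F" f2 f1 c2 c1 by (rule swap)
  show ?thesis
    unfolding PiOp2_eq_swap_args by (rule shear_automorphic_swap_args[OF swapped.shear_automorphic_PiOp1])
qed

lemma shear_automorphic_PiF: "shear_automorphic (PiF f1 f2 F) (4 * f1 + 4) (4 * f2 + 4) c1 c2"
  using shear_automorphic_mult[OF shear_automorphic_PiOp1 shear_automorphic_PiOp2]
  by (simp add: PiF_def algebra_simps)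

end

section \<open>Polynomials as coefficient functions\<close>

definition monomial_val :: "complex list \<Rightarrow> nat list \<Rightarrow> complex" where
  "monomial_val xs \<alpha> = (\<Prod>i<length xs. (xs ! i) ^ (\<alpha> ! i))"

definition poly_val :: "(nat list \<Rightarrow> complex) \<Rightarrow> complex list \<Rightarrow> complex" where
  "poly_val c xs = (\<Sum>\<alpha> | c \<alpha> \<noteq> 0. c \<alpha> * monomial_val xs \<alpha>)"

definition poly_coeffs :: "nat \<Rightarrow> (nat list \<Rightarrow> complex) \<Rightarrow> bool" where
  "poly_coeffs n c \<longleftrightarrow> finite {\<alpha>. c \<alpha> \<noteq> 0} \<and> (\<forall>\<alpha>. c \<alpha> \<noteq> 0 \<longrightarrow> length \<alpha> = n)"

definition pderiv_coeffs :: "nat \<Rightarrow> (nat list \<Rightarrow> complex) \<Rightarrow> nat list \<Rightarrow> complex" where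
  "pderiv_coeffs i c \<alpha> = of_nat (Suc (\<alpha> ! i)) * c (\<alpha>[i := Suc (\<alpha> ! i)])"

definition weight :: "(nat \<Rightarrow> int) \<Rightarrow> nat list \<Rightarrow> int" where
  "weight wt \<alpha> = (\<Sum>i<length \<alpha>. wt i * int (\<alpha> ! i))"

definition weighted_homogeneous :: "(nat \<Rightarrow> int) \<Rightarrow> int \<Rightarrow> (nat list \<Rightarrow> complex) \<Rightarrow> bool" where
  "weighted_homogeneous wt W c \<longleftrightarrow> (\<forall>\<alpha>. c \<alpha> \<noteq> 0 \<longrightarrow> weight wt \<alpha> = W)"

lemma poly_eval_eq_poly_val: "poly_eval c gs z1 z2 = poly_val c (map (\<lambda>g. g z1 z2) gs)"
  by (simp add: poly_eval_def poly_val_def monomial_val_def)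

lemma poly_coeffsD:
  "poly_coeffs n c \<Longrightarrow> finite {\<alpha>. c \<alpha> \<noteq> 0}"
  "poly_coeffs n c \<Longrightarrow> c \<alpha> \<noteq> 0 \<Longrightarrow> length \<alpha> = n"
  by (auto simp: poly_coeffs_def)

lemma poly_val_subset:
  assumes "finite A" "{\<alpha>. c \<alpha> \<noteq> 0} \<subseteq> A"
  shows "poly_val c xs = (\<Sum>\<alpha>\<in>A. c \<alpha> * monomial_val xs \<alpha>)"
  unfolding poly_val_def by (rule sum.mono_neutral_left) (use assms in auto)

lemma pderiv_coeffs_support:
  assumes "poly_coeffs n c" "pderiv_coeffs i c \<alpha> \<noteq> 0"
  shows "c (\<alpha>[i := Suc (\<alpha> ! i)]) \<noteq> 0" "length \<alpha> = n"
  using assms poly_coeffsD(2)[OF assms(1), of "\<alpha>[i := Suc (\<alpha> ! i)]"]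
  by (auto simp: pderiv_coeffs_def)

lemma poly_coeffs_pderiv_coeffs:
  assumes c: "poly_coeffs n c" and i: "i < n"
  shows "poly_coeffs n (pderiv_coeffs i c)"
proof -
  have "{\<alpha>. pderiv_coeffs i c \<alpha> \<noteq> 0} \<subseteq> (\<lambda>\<beta>. \<beta>[i := \<beta> ! i - 1]) ` {\<beta>. c \<beta> \<noteq> 0}"
  proof
    fix \<alpha> assume "\<alpha> \<in> {\<alpha>. pderiv_coeffs i c \<alpha> \<noteq> 0}"
    with pderiv_coeffs_support[OF c] i show "\<alpha> \<in> (\<lambda>\<beta>. \<beta>[i := \<beta> ! i - 1]) ` {\<beta>. c \<beta> \<noteq> 0}"
      by (intro image_eqI[where x = "\<alpha>[i := Suc (\<alpha> ! i)]"]) auto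
  qed
  then show ?thesis
    using c pderiv_coeffs_support[OF c] unfolding poly_coeffs_def by (auto intro: finite_surj)
qed

lemma poly_val_pderiv_coeffs:
  assumes c: "poly_coeffs (length xs) c" and i: "i < length xs"
  shows "poly_val (pderiv_coeffs i c) xs
    = (\<Sum>\<alpha> | c \<alpha> \<noteq> 0. c \<alpha> * of_nat (\<alpha> ! i) * monomial_val xs (\<alpha>[i := \<alpha> ! i - 1]))"
proof -
  let ?term = "\<lambda>\<alpha>. c \<alpha> * of_nat (\<alpha> ! i) * monomial_val xs (\<alpha>[i := \<alpha> ! i - 1])"
  have "poly_val (pderiv_coeffs i c) xs = (\<Sum>\<alpha> | c \<alpha> \<noteq> 0 \<and> \<alpha> ! i > 0. ?term \<alpha>)"
    unfolding poly_val_def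
  proof (rule sum.reindex_bij_witness[where j = "\<lambda>\<alpha>. \<alpha>[i := Suc (\<alpha> ! i)]" and i = "\<lambda>\<alpha>. \<alpha>[i := \<alpha> ! i - 1]"])
    fix \<alpha> assume "\<alpha> \<in> {\<alpha>. pderiv_coeffs i c \<alpha> \<noteq> 0}"
    with pderiv_coeffs_support[OF c] i
    show "(\<alpha>[i := Suc (\<alpha> ! i)])[i := \<alpha>[i := Suc (\<alpha> ! i)] ! i - 1] = \<alpha>"
      "\<alpha>[i := Suc (\<alpha> ! i)] \<in> {\<alpha>. c \<alpha> \<noteq> 0 \<and> \<alpha> ! i > 0}"
      "?term (\<alpha>[i := Suc (\<alpha> ! i)]) = pderiv_coeffs i c \<alpha> * monomial_val xs \<alpha>"
      by (auto simp: pderiv_coeffs_def)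
  next
    fix \<alpha> assume \<alpha>: "\<alpha> \<in> {\<alpha>. c \<alpha> \<noteq> 0 \<and> \<alpha> ! i > 0}"
    then have "length \<alpha> = length xs" using poly_coeffsD(2)[OF c] by auto
    with \<alpha> i show "(\<alpha>[i := \<alpha> ! i - 1])[i := Suc (\<alpha>[i := \<alpha> ! i - 1] ! i)] = \<alpha>"
      "\<alpha>[i := \<alpha> ! i - 1] \<in> {\<alpha>. pderiv_coeffs i c \<alpha> \<noteq> 0}"
      by (auto simp: pderiv_coeffs_def)
  qed
  also have "\<dots> = (\<Sum>\<alpha> | c \<alpha> \<noteq> 0. ?term \<alpha>)"
    using poly_coeffsD(1)[OF c] by (intro sum.mono_neutral_left) auto
  finally show ?thesis .
qed

lemma monomial_val_update:
  assumes "i < length xs" "i < length \<alpha>"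
  shows "monomial_val xs (\<alpha>[i := k]) = (xs ! i) ^ k * (\<Prod>j\<in>{..<length xs} - {i}. (xs ! j) ^ (\<alpha> ! j))"
proof -
  have "monomial_val xs (\<alpha>[i := k]) = (xs ! i) ^ (\<alpha>[i := k] ! i)
      * (\<Prod>j\<in>{..<length xs} - {i}. (xs ! j) ^ (\<alpha>[i := k] ! j))"
    unfolding monomial_val_def using assms by (intro prod.remove) auto
  then show ?thesis
    using assms(2) by (auto intro!: prod.cong)
qed

lemma monomial_val_lower:
  assumes "i < length xs" "i < length \<alpha>"
  shows "of_nat (\<alpha> ! i) * (xs ! i * monomial_val xs (\<alpha>[i := \<alpha> ! i - 1])) = of_nat (\<alpha> ! i) * monomial_val xs \<alpha>"
proof (cases "\<alpha> ! i")
  case (Suc k)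
  then have "monomial_val xs \<alpha> = monomial_val xs (\<alpha>[i := Suc k])"
    by (metis assms(2) list_update_id)
  then show ?thesis
    using assms Suc by (simp add: monomial_val_update)
qed simp

lemma has_field_derivative_monomial_val:
  assumes "\<And>i. i < length hs \<Longrightarrow> ((hs ! i) has_field_derivative hs' ! i) (at z)"
    and "length \<alpha> = length hs"
  shows "((\<lambda>w. monomial_val (map (\<lambda>h. h w) hs) \<alpha>) has_field_derivative
    (\<Sum>i<length hs. of_nat (\<alpha> ! i) * hs' ! i * monomial_val (map (\<lambda>h. h z) hs) (\<alpha>[i := \<alpha> ! i - 1]))) (at z)"
proof -
  have "((\<lambda>w. \<Prod>i<length hs. (hs ! i) w ^ (\<alpha> ! i)) has_field_derivative
      (\<Sum>i<length hs. of_nat (\<alpha> ! i) * (hs ! i) z ^ (\<alpha> ! i - 1) * hs' ! i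
        * (\<Prod>j\<in>{..<length hs} - {i}. (hs ! j) z ^ (\<alpha> ! j)))) (at z)"
    by (rule has_field_derivative_prod) (auto intro!: derivative_eq_intros assms(1))
  moreover have "(\<lambda>w. monomial_val (map (\<lambda>h. h w) hs) \<alpha>) = (\<lambda>w. \<Prod>i<length hs. (hs ! i) w ^ (\<alpha> ! i))"
    by (simp add: monomial_val_def)
  moreover have "(\<Sum>i<length hs. of_nat (\<alpha> ! i) * hs' ! i * monomial_val (map (\<lambda>h. h z) hs) (\<alpha>[i := \<alpha> ! i - 1]))
      = (\<Sum>i<length hs. of_nat (\<alpha> ! i) * (hs ! i) z ^ (\<alpha> ! i - 1) * hs' ! i
        * (\<Prod>j\<in>{..<length hs} - {i}. (hs ! j) z ^ (\<alpha> ! j)))"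
    using assms(2) by (intro sum.cong) (simp_all add: monomial_val_update)
  ultimately show ?thesis by simp
qed

lemma has_field_derivative_poly_val:
  assumes c: "poly_coeffs (length hs) c"
    and hs: "\<And>i. i < length hs \<Longrightarrow> ((hs ! i) has_field_derivative hs' ! i) (at z)"
  shows "((\<lambda>w. poly_val c (map (\<lambda>h. h w) hs)) has_field_derivative
    (\<Sum>i<length hs. poly_val (pderiv_coeffs i c) (map (\<lambda>h. h z) hs) * hs' ! i)) (at z)"
proof -
  let ?xs = "map (\<lambda>h. h z) hs"
  have "((\<lambda>w. poly_val c (map (\<lambda>h. h w) hs)) has_field_derivative (\<Sum>\<alpha> | c \<alpha> \<noteq> 0.
      c \<alpha> * (\<Sum>i<length hs. of_nat (\<alpha> ! i) * hs' ! i * monomial_val ?xs (\<alpha>[i := \<alpha> ! i - 1])))) (at z)"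
    unfolding poly_val_def using poly_coeffsD(2)[OF c]
    by (intro DERIV_sum DERIV_cmult has_field_derivative_monomial_val hs) auto
  also have "(\<Sum>\<alpha> | c \<alpha> \<noteq> 0.
      c \<alpha> * (\<Sum>i<length hs. of_nat (\<alpha> ! i) * hs' ! i * monomial_val ?xs (\<alpha>[i := \<alpha> ! i - 1])))
    = (\<Sum>i<length hs. poly_val (pderiv_coeffs i c) ?xs * hs' ! i)"
    using c by (simp add: poly_val_pderiv_coeffs sum_distrib_left sum_distrib_right mult_ac sum.swap[of _ _ "{..<length hs}"])
  finally show ?thesis .
qed

lemma poly_val_euler:
  assumes c: "poly_coeffs (length xs) c" and hom: "weighted_homogeneous wt W c"
  shows "(\<Sum>i<length xs. of_int (wt i) * xs ! i * poly_val (pderiv_coeffs i c) xs) = of_int W * poly_val c xs"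
proof -
  have "(\<Sum>i<length xs. of_int (wt i) * xs ! i * poly_val (pderiv_coeffs i c) xs)
      = (\<Sum>\<alpha> | c \<alpha> \<noteq> 0. c \<alpha> * (\<Sum>i<length xs. of_int (wt i) * (of_nat (\<alpha> ! i) * (xs ! i * monomial_val xs (\<alpha>[i := \<alpha> ! i - 1])))))"
    using c by (simp add: poly_val_pderiv_coeffs sum_distrib_left sum_distrib_right mult_ac sum.swap[of _ "{..<length xs}"])
  also have "\<dots> = (\<Sum>\<alpha> | c \<alpha> \<noteq> 0. c \<alpha> * monomial_val xs \<alpha> * of_int (weight wt \<alpha>))"
  proof (intro sum.cong refl)
    fix \<alpha> assume "\<alpha> \<in> {\<alpha>. c \<alpha> \<noteq> 0}"
    then have len: "length \<alpha> = length xs" using poly_coeffsD(2)[OF c] by auto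
    have "(\<Sum>i<length xs. of_int (wt i) * (of_nat (\<alpha> ! i) * (xs ! i * monomial_val xs (\<alpha>[i := \<alpha> ! i - 1]))))
        = (\<Sum>i<length xs. of_int (wt i) * (of_nat (\<alpha> ! i) * monomial_val xs \<alpha>))"
    proof (intro sum.cong refl)
      fix i assume "i \<in> {..<length xs}"
      then show "of_int (wt i) * (of_nat (\<alpha> ! i) * (xs ! i * monomial_val xs (\<alpha>[i := \<alpha> ! i - 1])))
          = of_int (wt i) * (of_nat (\<alpha> ! i) * monomial_val xs \<alpha>)"
        using monomial_val_lower[of i xs \<alpha>] len by simp
    qed
    then show "c \<alpha> * (\<Sum>i<length xs. of_int (wt i) * (of_nat (\<alpha> ! i) * (xs ! i * monomial_val xs (\<alpha>[i := \<alpha> ! i - 1]))))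
        = c \<alpha> * monomial_val xs \<alpha> * of_int (weight wt \<alpha>)"
      using len by (simp add: weight_def sum_distrib_left sum_distrib_right mult_ac)
  qed
  also have "\<dots> = of_int W * poly_val c xs"
    using hom by (simp add: poly_val_def weighted_homogeneous_def sum_distrib_left mult_ac)
  finally show ?thesis .
qed

lemma weight_increment:
  assumes i: "i < length \<alpha>"
  shows "weight wt (\<alpha>[i := Suc (\<alpha> ! i)]) = weight wt \<alpha> + wt i"
proof -
  have rest: "(\<Sum>j\<in>{..<length \<alpha>} - {i}. wt j * int (\<alpha>[i := Suc (\<alpha> ! i)] ! j))
      = (\<Sum>j\<in>{..<length \<alpha>} - {i}. wt j * int (\<alpha> ! j))"
    by (intro sum.cong) auto
  show ?thesis
    unfolding weight_def length_list_update
    using i by (simp add: sum.remove[of _ i] rest algebra_simps)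
qed

lemma weighted_homogeneous_pderiv_coeffs:
  assumes c: "poly_coeffs n c" and hom: "weighted_homogeneous wt W c" and i: "i < n"
  shows "weighted_homogeneous wt (W - wt i) (pderiv_coeffs i c)"
  unfolding weighted_homogeneous_def
proof (intro allI impI)
  fix \<alpha> assume "pderiv_coeffs i c \<alpha> \<noteq> 0"
  with pderiv_coeffs_support[OF c] have "c (\<alpha>[i := Suc (\<alpha> ! i)]) \<noteq> 0" "length \<alpha> = n"
    by auto
  with hom i weight_increment[of i \<alpha> wt] show "weight wt \<alpha> = W - wt i"
    by (simp add: weighted_homogeneous_def)
qed

lemma sum_list_pderiv_support:
  assumes "poly_coeffs n c" "i < n" "pderiv_coeffs i c \<alpha> \<noteq> 0"
  shows "sum_list (\<alpha>[i := Suc (\<alpha> ! i)]) = Suc (sum_list \<alpha>)"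
  using assms pderiv_coeffs_support[OF assms(1)] by (simp add: sum_list_update)

lemma pderiv_coeffs_eq_0_imp_constant:
  assumes c: "poly_coeffs n c" and D: "\<And>i. i < n \<Longrightarrow> pderiv_coeffs i c = (\<lambda>_. 0)"
    and "c \<alpha> \<noteq> 0"
  shows "\<alpha> = replicate n 0"
proof (rule ccontr)
  have len: "length \<alpha> = n" using poly_coeffsD(2)[OF c assms(3)] .
  assume "\<alpha> \<noteq> replicate n 0"
  then have "\<exists>i<n. \<alpha> ! i \<noteq> 0"
    using len by (auto intro: nth_equalityI)
  then obtain i k where i: "i < n" and k: "\<alpha> ! i = Suc k"
    using not0_implies_Suc by blast
  have "\<alpha>[i := Suc k] = \<alpha>"
    by (metis k list_update_id)
  then have "pderiv_coeffs i c (\<alpha>[i := k]) = of_nat (Suc k) * c \<alpha>"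
    using i len by (simp add: pderiv_coeffs_def)
  then show False using D[OF i] assms(3) by (simp del: of_nat_Suc)
qed

lemma poly_val_eq_constant_coeff:
  assumes c: "poly_coeffs n c" and D: "\<And>i. i < n \<Longrightarrow> pderiv_coeffs i c = (\<lambda>_. 0)"
    and xs: "length xs = n"
  shows "poly_val c xs = c (replicate n 0)"
proof -
  have "poly_val c xs = (\<Sum>\<alpha>\<in>{replicate n 0}. c \<alpha> * monomial_val xs \<alpha>)"
    using pderiv_coeffs_eq_0_imp_constant[OF c D] by (intro poly_val_subset) auto
  then show ?thesis using xs by (simp add: monomial_val_def)
qed

lemma poly_val_vanishing_imp_pderiv_relation:
  assumes c: "poly_coeffs (length hs) c"
    and hs: "\<And>i. i < length hs \<Longrightarrow> ((hs ! i) has_field_derivative hs' ! i) (at z)"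
    and U: "open U" "z \<in> U" and zero: "\<And>w. w \<in> U \<Longrightarrow> poly_val c (map (\<lambda>h. h w) hs) = 0"
  shows "(\<Sum>i<length hs. poly_val (pderiv_coeffs i c) (map (\<lambda>h. h z) hs) * hs' ! i) = 0"
proof -
  have "((\<lambda>w. poly_val c (map (\<lambda>h. h w) hs)) has_field_derivative
      (\<Sum>i<length hs. poly_val (pderiv_coeffs i c) (map (\<lambda>h. h z) hs) * hs' ! i)) (at z)"
    by (rule has_field_derivative_poly_val[OF c hs])
  then have "((\<lambda>w. 0) has_field_derivative
      (\<Sum>i<length hs. poly_val (pderiv_coeffs i c) (map (\<lambda>h. h z) hs) * hs' ! i)) (at z)"
    by (rule has_field_derivative_transform_within_open[OF _ U]) (simp add: zero)
  then show ?thesis using DERIV_const DERIV_unique by blast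
qed

section \<open>Splitting relations into bihomogeneous parts\<close>

lemma poly_eq_0_if_vanishes_on_Ints:
  fixes p :: "'a :: {field_char_0} poly"
  assumes "\<And>n::int. poly p (of_int n) = 0"
  shows "p = 0"
proof (rule ccontr)
  assume "p \<noteq> 0"
  then have "finite {x. poly p x = 0}" by (rule poly_roots_finite)
  moreover have "range (of_int :: int \<Rightarrow> 'a) \<subseteq> {x. poly p x = 0}"
    using assms by auto
  moreover have "infinite (range (of_int :: int \<Rightarrow> 'a))"
    using finite_imageD[of "of_int :: int \<Rightarrow> 'a" UNIV] by (auto simp: inj_on_def)
  ultimately show False using finite_subset by blast
qed

lemma sum_affine_powers_vanish:
  fixes S :: "'w \<Rightarrow> complex" and a b :: "'w \<Rightarrow> nat"
  assumes "finite W"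
    and "\<And>n::int. (\<Sum>w\<in>W. S w * (p1 + q1 * of_int n) ^ a w * (p2 + q2 * of_int n) ^ b w) = 0"
  shows "(\<Sum>w\<in>W. S w * (p1 + q1 * t) ^ a w * (p2 + q2 * t) ^ b w) = 0"
proof -
  define P where "P = (\<Sum>w\<in>W. smult (S w) ([:p1, q1:] ^ a w * [:p2, q2:] ^ b w))"
  have P: "poly P x = (\<Sum>w\<in>W. S w * (p1 + q1 * x) ^ a w * (p2 + q2 * x) ^ b w)" for x
    unfolding P_def poly_sum by (simp add: mult_ac)
  have "P = 0"
    by (rule poly_eq_0_if_vanishes_on_Ints) (use assms(2) in \<open>simp add: P\<close>)
  then show ?thesis using P[of t] by simp
qed

lemma coeff_sum_smult_monom:
  fixes k :: "'w \<Rightarrow> 'a :: comm_ring_1"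
  assumes "finite A"
  shows "coeff (\<Sum>w\<in>A. smult (k w) (monom 1 (a w))) i = (\<Sum>w | w \<in> A \<and> a w = i. k w)"
  unfolding coeff_sum using assms by (simp add: sum.inter_filter[symmetric] if_distrib cong: if_cong)

lemma monomials_linearly_independent:
  fixes S :: "'w \<Rightarrow> complex" and a b :: "'w \<Rightarrow> nat"
  assumes fin: "finite W" and inj: "inj_on (\<lambda>w. (a w, b w)) W"
    and zero: "\<And>u v. (\<Sum>w\<in>W. S w * u ^ a w * v ^ b w) = 0"
    and w0: "w0 \<in> W"
  shows "S w0 = 0"
proof -
  have slice: "(\<Sum>w | w \<in> W \<and> a w = a w0. S w * v ^ b w) = 0" for v
  proof -
    define P where "P = (\<Sum>w\<in>W. smult (S w * v ^ b w) (monom 1 (a w)))"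
    have "poly P u = 0" for u
      unfolding P_def poly_sum using zero[of u v] by (simp add: poly_monom mult_ac)
    then have "coeff P (a w0) = 0" using poly_all_0_iff_0 by (metis coeff_0)
    then show ?thesis unfolding P_def coeff_sum_smult_monom[OF fin] .
  qed
  define Q where "Q = (\<Sum>w | w \<in> W \<and> a w = a w0. smult (S w) (monom 1 (b w)))"
  have "poly Q v = 0" for v
    unfolding Q_def poly_sum using slice[of v] by (simp add: poly_monom mult_ac)
  then have "coeff Q (b w0) = 0" using poly_all_0_iff_0 by (metis coeff_0)
  moreover have "{w. w \<in> {w \<in> W. a w = a w0} \<and> b w = b w0} = {w0}"
    using inj w0 by (auto simp: inj_on_def)
  ultimately show ?thesis
    unfolding Q_def using fin by (subst (asm) coeff_sum_smult_monom) auto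
qed

lemma power_int_shift_nat:
  fixes u :: complex
  assumes "u \<noteq> 0" "k + N \<ge> 0" "N \<ge> 0"
  shows "u powi k * u ^ nat N = u ^ nat (k + N)"
proof -
  have "u powi k * u ^ nat N = u powi k * u powi N" using assms by (simp add: power_int_def)
  also have "\<dots> = u powi (k + N)" using assms by (simp add: power_int_add)
  also have "\<dots> = u ^ nat (k + N)" using assms by (simp add: power_int_def)
  finally show ?thesis .
qed

text \<open>The points \<open>(n + m \<omega>1, n + m \<omega>2)\<close>, \<open>n, m \<in> \<int>\<close>, are Zariski dense in \<open>\<complex>\<^sup>2\<close> because
  \<open>\<omega>1 \<noteq> \<omega>2\<close>: vanishing on \<open>\<int>\<close> in \<open>n\<close> and then in \<open>m\<close> gives vanishing on \<open>\<complex>\<^sup>2\<close>.\<close>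
lemma polynomial_vanishing_on_lattice:
  fixes S :: "'w \<Rightarrow> complex" and a b :: "'w \<Rightarrow> nat"
  assumes fin: "finite W" and z0: "z1 \<noteq> 0" "z2 \<noteq> 0" and om: "\<omega>1 \<noteq> \<omega>2"
    and lattice: "\<And>(n::int) (m::int). (\<Sum>w\<in>W. S w * shear_factor (n + m * \<omega>1) z1 ^ a w
                                 * shear_factor (n + m * \<omega>2) z2 ^ b w) = 0"
  shows "(\<Sum>w\<in>W. S w * u ^ a w * v ^ b w) = 0"
proof -
  have "(\<Sum>w\<in>W. S w * (of_real (m * \<omega>1) * z1 + 1 + z1 * of_int n) ^ a w
                  * (of_real (m * \<omega>2) * z2 + 1 + z2 * of_int n) ^ b w) = 0" for n m :: int
    using lattice[of n m] by (simp add: shear_factor_def algebra_simps)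
  then have "(\<Sum>w\<in>W. S w * (of_real (m * \<omega>1) * z1 + 1 + z1 * t) ^ a w
                  * (of_real (m * \<omega>2) * z2 + 1 + z2 * t) ^ b w) = 0" for t :: complex and m :: int
    by (rule sum_affine_powers_vanish[OF fin])
  then have "(\<Sum>w\<in>W. S w * (z1 * t + 1 + of_real \<omega>1 * z1 * of_int m) ^ a w
                  * (z2 * t + 1 + of_real \<omega>2 * z2 * of_int m) ^ b w) = 0" for t :: complex and m :: int
    by (simp add: algebra_simps)
  then have on_plane: "(\<Sum>w\<in>W. S w * (z1 * t + 1 + of_real \<omega>1 * z1 * s) ^ a w
                  * (z2 * t + 1 + of_real \<omega>2 * z2 * s) ^ b w) = 0" for t s :: complex
    by (rule sum_affine_powers_vanish[OF fin])
  have om': "of_real \<omega>1 - of_real \<omega>2 \<noteq> (0 :: complex)" using om by simp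
  define s where "s = ((u - 1) / z1 - (v - 1) / z2) / (of_real \<omega>1 - of_real \<omega>2)"
  define t where "t = (u - 1) / z1 - of_real \<omega>1 * s"
  have "z1 * t + 1 + of_real \<omega>1 * z1 * s = u"
    using z0 by (simp add: t_def field_simps)
  moreover have "(of_real \<omega>1 - of_real \<omega>2) * s = (u - 1) / z1 - (v - 1) / z2"
    using om' by (simp add: s_def)
  then have "t + of_real \<omega>2 * s = (v - 1) / z2"
    by (simp add: t_def algebra_simps)
  then have "z2 * t + 1 + of_real \<omega>2 * z2 * s = v"
    using z0 by (simp add: field_simps)
  ultimately show ?thesis using on_plane[of t s] by simp
qed

lemma shear_factor_powers_independent:
  fixes S :: "int \<times> int \<Rightarrow> complex"
  assumes fin: "finite W" and z: "z1 \<in> upper_half" "z2 \<in> upper_half" and om: "\<omega>1 \<noteq> \<omega>2"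
    and rel: "\<And>(n::int) (m::int). (\<Sum>w\<in>W. shear_factor (n + m * \<omega>1) z1 powi fst w
                               * shear_factor (n + m * \<omega>2) z2 powi snd w * S w) = 0"
    and w0: "w0 \<in> W"
  shows "S w0 = 0"
proof -
  define N where "N = (\<Sum>w\<in>W. \<bar>fst w\<bar> + \<bar>snd w\<bar>)"
  have N: "\<bar>fst w\<bar> \<le> N" "\<bar>snd w\<bar> \<le> N" if "w \<in> W" for w
    using member_le_sum[OF that _ fin, of "\<lambda>w. \<bar>fst w\<bar> + \<bar>snd w\<bar>"] by (auto simp: N_def)
  have N0: "N \<ge> 0" unfolding N_def by (rule sum_nonneg) auto
  define a :: "int \<times> int \<Rightarrow> nat" where "a w = nat (fst w + N)" for w
  define b :: "int \<times> int \<Rightarrow> nat" where "b w = nat (snd w + N)" for w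
  have inj: "inj_on (\<lambda>w. (a w, b w)) W"
  proof (rule inj_onI)
    fix x y assume "x \<in> W" "y \<in> W" "(a x, b x) = (a y, b y)"
    then show "x = y" using N[of x] N[of y] by (auto simp: a_def b_def prod_eq_iff)
  qed
  have z0: "z1 \<noteq> 0" "z2 \<noteq> 0" using z by (auto simp: upper_half_def)
  have "(\<Sum>w\<in>W. S w * shear_factor (n + m * \<omega>1) z1 ^ a w * shear_factor (n + m * \<omega>2) z2 ^ b w) = 0"
    for n m :: int
  proof -
    define u where "u = shear_factor (n + m * \<omega>1) z1"
    define v where "v = shear_factor (n + m * \<omega>2) z2"
    have uv: "u \<noteq> 0" "v \<noteq> 0" unfolding u_def v_def using shear_factor_nonzero z by auto
    have "(\<Sum>w\<in>W. S w * u ^ a w * v ^ b w) = (\<Sum>w\<in>W. u powi fst w * v powi snd w * S w) * (u ^ nat N * v ^ nat N)"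
      unfolding sum_distrib_right
    proof (intro sum.cong refl)
      fix w assume "w \<in> W"
      then have "fst w + N \<ge> 0" "snd w + N \<ge> 0" using N by fastforce+
      then have "u ^ a w = u powi fst w * u ^ nat N" "v ^ b w = v powi snd w * v ^ nat N"
        using N0 uv by (simp_all add: a_def b_def power_int_shift_nat)
      then show "S w * u ^ a w * v ^ b w = u powi fst w * v powi snd w * S w * (u ^ nat N * v ^ nat N)"
        by (simp add: mult_ac)
    qed
    also have "\<dots> = 0" using rel[of n m] by (simp add: u_def v_def)
    finally show ?thesis by (simp add: u_def v_def)
  qed
  then show ?thesis
    by (rule monomials_linearly_independent[OF fin inj polynomial_vanishing_on_lattice[OF fin z0 om] w0])
qed

lemma prod_power_int_power:
  fixes x :: complex
  assumes "x \<noteq> 0" "finite I"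
  shows "(\<Prod>i\<in>I. (x powi k i) ^ n i) = x powi (\<Sum>i\<in>I. k i * int (n i))"
  using assms(2) by induction (simp_all add: assms(1) power_int_add power_int_mult)

lemma monomial_val_at_shear:
  assumes z: "z1 \<in> upper_half" "z2 \<in> upper_half"
    and aut: "\<And>i. i < length gs \<Longrightarrow> shear_automorphic (gs ! i) (wt1 i) (wt2 i) c1 c2"
    and len: "length \<alpha> = length gs"
  shows "monomial_val (map (\<lambda>g. g (shear c1 z1) (shear c2 z2)) gs) \<alpha>
    = shear_factor c1 z1 powi weight wt1 \<alpha> * shear_factor c2 z2 powi weight wt2 \<alpha>
      * monomial_val (map (\<lambda>g. g z1 z2) gs) \<alpha>"
proof -
  let ?j1 = "shear_factor c1 z1" and ?j2 = "shear_factor c2 z2"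
  have "monomial_val (map (\<lambda>g. g (shear c1 z1) (shear c2 z2)) gs) \<alpha>
      = (\<Prod>i<length gs. (?j1 powi wt1 i) ^ (\<alpha> ! i) * (?j2 powi wt2 i) ^ (\<alpha> ! i) * (gs ! i) z1 z2 ^ (\<alpha> ! i))"
    unfolding monomial_val_def length_map
  proof (intro prod.cong refl)
    fix i assume "i \<in> {..<length gs}"
    moreover have "(gs ! i) (shear c1 z1) (shear c2 z2) = ?j1 powi wt1 i * ?j2 powi wt2 i * (gs ! i) z1 z2"
      if "i < length gs" using aut[OF that] z by (simp add: shear_automorphic_def)
    ultimately show "map (\<lambda>g. g (shear c1 z1) (shear c2 z2)) gs ! i ^ (\<alpha> ! i)
        = (?j1 powi wt1 i) ^ (\<alpha> ! i) * (?j2 powi wt2 i) ^ (\<alpha> ! i) * (gs ! i) z1 z2 ^ (\<alpha> ! i)"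
      by (simp add: power_mult_distrib)
  qed
  also have "\<dots> = ?j1 powi weight wt1 \<alpha> * ?j2 powi weight wt2 \<alpha> * monomial_val (map (\<lambda>g. g z1 z2) gs) \<alpha>"
    using shear_factor_nonzero[OF z(1)] shear_factor_nonzero[OF z(2)] len
    by (simp add: prod.distrib monomial_val_def weight_def prod_power_int_power)
  finally show ?thesis .
qed

definition bihomogeneous_part ::
    "(nat \<Rightarrow> int) \<Rightarrow> (nat \<Rightarrow> int) \<Rightarrow> int \<times> int \<Rightarrow> (nat list \<Rightarrow> complex) \<Rightarrow> nat list \<Rightarrow> complex" where
  "bihomogeneous_part wt1 wt2 w c \<alpha> = (if (weight wt1 \<alpha>, weight wt2 \<alpha>) = w then c \<alpha> else 0)"

lemma bihomogeneous_part_poly_coeffs: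
  "poly_coeffs n c \<Longrightarrow> poly_coeffs n (bihomogeneous_part wt1 wt2 w c)"
  unfolding poly_coeffs_def bihomogeneous_part_def by (auto elim: rev_finite_subset)

lemma weighted_homogeneous_bihomogeneous_part:
  "weighted_homogeneous wt1 (fst w) (bihomogeneous_part wt1 wt2 w c)"
  "weighted_homogeneous wt2 (snd w) (bihomogeneous_part wt1 wt2 w c)"
  by (auto simp: weighted_homogeneous_def bihomogeneous_part_def split: if_splits)

text \<open>The shear by \<open>(n + m \<omega>1, n + m \<omega>2)\<close> multiplies the bihomogeneous part of weight
  \<open>w\<close> by a character of \<open>(n, m)\<close> depending on \<open>w\<close>, and distinct characters are independent.\<close>
lemma bihomogeneous_part_vanishes:
  assumes c: "poly_coeffs (length gs) c" and om: "\<omega>1 \<noteq> \<omega>2"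
    and aut: "\<And>(n::int) (m::int) i. i < length gs \<Longrightarrow>
       shear_automorphic (gs ! i) (wt1 i) (wt2 i) (n + m * \<omega>1) (n + m * \<omega>2)"
    and zero: "\<And>z1 z2. z1 \<in> upper_half \<Longrightarrow> z2 \<in> upper_half \<Longrightarrow> poly_eval c gs z1 z2 = 0"
    and z: "z1 \<in> upper_half" "z2 \<in> upper_half"
  shows "poly_eval (bihomogeneous_part wt1 wt2 w c) gs z1 z2 = 0"
proof -
  define A where "A = {\<alpha>. c \<alpha> \<noteq> 0}"
  define wts where "wts \<alpha> = (weight wt1 \<alpha>, weight wt2 \<alpha>)" for \<alpha>
  define S where "S w' = (\<Sum>\<alpha> | \<alpha> \<in> A \<and> wts \<alpha> = w'. c \<alpha> * monomial_val (map (\<lambda>g. g z1 z2) gs) \<alpha>)" for w'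
  have finA: "finite A" using poly_coeffsD(1)[OF c] by (simp add: A_def)
  have rel: "(\<Sum>w'\<in>wts ` A. shear_factor (n + m * \<omega>1) z1 powi fst w'
      * shear_factor (n + m * \<omega>2) z2 powi snd w' * S w') = 0" for n m :: int
  proof -
    let ?j1 = "shear_factor (n + m * \<omega>1) z1" and ?j2 = "shear_factor (n + m * \<omega>2) z2"
    have "0 = poly_eval c gs (shear (n + m * \<omega>1) z1) (shear (n + m * \<omega>2) z2)"
      using zero shear_in_upper_half z by auto
    also have "\<dots> = (\<Sum>\<alpha>\<in>A. c \<alpha> * (?j1 powi fst (wts \<alpha>) * ?j2 powi snd (wts \<alpha>)
        * monomial_val (map (\<lambda>g. g z1 z2) gs) \<alpha>))"
      unfolding poly_eval_eq_poly_val poly_val_def A_def wts_def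
      using poly_coeffsD(2)[OF c] by (intro sum.cong refl) (simp add: monomial_val_at_shear[OF z aut])
    also have "\<dots> = (\<Sum>w'\<in>wts ` A. \<Sum>\<alpha> | \<alpha> \<in> A \<and> wts \<alpha> = w'. c \<alpha> * (?j1 powi fst (wts \<alpha>) * ?j2 powi snd (wts \<alpha>)
        * monomial_val (map (\<lambda>g. g z1 z2) gs) \<alpha>))"
      by (rule sum.image_gen[OF finA])
    also have "\<dots> = (\<Sum>w'\<in>wts ` A. ?j1 powi fst w' * ?j2 powi snd w' * S w')"
      unfolding S_def sum_distrib_left by (intro sum.cong refl) (auto simp: mult_ac)
    finally show ?thesis by simp
  qed
  have S0: "S w' = 0" if "w' \<in> wts ` A" for w'
    using shear_factor_powers_independent[OF finite_imageI[OF finA] z om rel that] .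
  have "poly_eval (bihomogeneous_part wt1 wt2 w c) gs z1 z2 = S w"
    unfolding poly_eval_eq_poly_val poly_val_def S_def A_def wts_def bihomogeneous_part_def
    by (intro sum.cong) auto
  also have "S w = 0"
  proof (cases "w \<in> wts ` A")
    case False
    then have "{\<alpha>. \<alpha> \<in> A \<and> wts \<alpha> = w} = {}" by auto
    then show ?thesis unfolding S_def by (simp only: sum.empty)
  qed (rule S0)
  finally show ?thesis .
qed

section \<open>Relations between F, Lambda F and Pi F\<close>

lemma poly_eval_vanishing_imp_pd_relation:
  assumes gs: "\<And>i. i < length gs \<Longrightarrow> holomorphic_H2 (gs ! i)"
    and c: "poly_coeffs (length gs) c"
    and V: "open V" "V \<subseteq> upper_half \<times> upper_half"
    and zero: "\<And>x y. (x, y) \<in> V \<Longrightarrow> poly_eval c gs x y = 0"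
    and ab: "(a, b) \<in> V" and j: "j = 1 \<or> j = 2"
  shows "(\<Sum>i<length gs. poly_eval (pderiv_coeffs i c) gs a b * pd j (gs ! i) a b) = 0"
proof -
  have ab': "a \<in> upper_half" "b \<in> upper_half" using V(2) ab by auto
  show ?thesis using j
  proof
    assume "j = 1"
    have U: "open ((\<lambda>w. (w, b)) -` V)"
      by (rule continuous_open_vimage[OF V(1)]) (intro continuous_intros)
    have "(\<Sum>i<length (map (\<lambda>g w. g w b) gs). poly_val (pderiv_coeffs i c) (map (\<lambda>h. h a) (map (\<lambda>g w. g w b) gs))
        * map (\<lambda>g. pd1 g a b) gs ! i) = 0"
      by (rule poly_val_vanishing_imp_pderiv_relation[OF _ _ U])
         (use c gs ab ab' zero in \<open>auto simp: poly_eval_eq_poly_val comp_def intro: has_field_derivative_pd1\<close>)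
    then show ?thesis using \<open>j = 1\<close> by (simp add: poly_eval_eq_poly_val comp_def pd_def)
  next
    assume "j = 2"
    have U: "open ((\<lambda>w. (a, w)) -` V)"
      by (rule continuous_open_vimage[OF V(1)]) (intro continuous_intros)
    have "(\<Sum>i<length (map (\<lambda>g w. g a w) gs). poly_val (pderiv_coeffs i c) (map (\<lambda>h. h b) (map (\<lambda>g w. g a w) gs))
        * map (\<lambda>g. pd2 g a b) gs ! i) = 0"
      by (rule poly_val_vanishing_imp_pderiv_relation[OF _ _ U])
         (use c gs ab ab' zero in \<open>auto simp: poly_eval_eq_poly_val comp_def intro: has_field_derivative_pd2\<close>)
    then show ?thesis using \<open>j = 2\<close> by (simp add: poly_eval_eq_poly_val comp_def pd_def)
  qed
qed

lemma poly_eval_euler: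
  assumes "poly_coeffs (length gs) c" "weighted_homogeneous wt W c"
  shows "(\<Sum>i<length gs. of_int (wt i) * (gs ! i) a b * poly_eval (pderiv_coeffs i c) gs a b)
    = of_int W * poly_eval c gs a b"
  using poly_val_euler[of "map (\<lambda>g. g a b) gs" c wt W] assms by (simp add: poly_eval_eq_poly_val)

lemma sum_lessThan_3: "(\<Sum>i<(3::nat). f i) = f 0 + f 1 + f 2"
  by (simp add: eval_nat_numeral)

definition FLP :: "int \<Rightarrow> int \<Rightarrow> (complex \<Rightarrow> complex \<Rightarrow> complex) \<Rightarrow> (complex \<Rightarrow> complex \<Rightarrow> complex) list" where
  "FLP f1 f2 F = [F, LambdaF F, PiF f1 f2 F]"

definition FLP_weight :: "int \<Rightarrow> nat \<Rightarrow> int" where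
  "FLP_weight f i = [f, 2 * f + 2, 4 * f + 4] ! i"

lemma holomorphic_H2_FLP:
  "holomorphic_H2 F \<Longrightarrow> i < length (FLP f1 f2 F) \<Longrightarrow> holomorphic_H2 (FLP f1 f2 F ! i)"
  by (auto simp: FLP_def less_Suc_eq numeral_3_eq_3 holomorphic_H2_LambdaF holomorphic_H2_PiF)

lemma length_FLP [simp]: "length (FLP f1 f2 F) = 3"
  by (simp add: FLP_def)

text \<open>The two chain-rule relations and the two Euler relations satisfied by the partial
  derivatives \<open>P\<^sub>X, P\<^sub>L, P\<^sub>Q\<close> of a relation form a linear system; eliminating \<open>P\<^sub>X\<close> leaves a
  \<open>2 \<times> 2\<close> system in \<open>(P\<^sub>L, P\<^sub>Q)\<close> whose determinant is \<open>T F\<close>.\<close>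
lemma cramer_brackets:
  fixes PX PL PQ X L Q X1 L1 Q1 X2 L2 Q2 f1 f2 g1 g2 h1 h2 k :: complex
  assumes e1: "PX * X1 + PL * L1 + PQ * Q1 = 0" and e2: "PX * X2 + PL * L2 + PQ * Q2 = 0"
    and u1: "f1 * X * PX + g1 * L * PL + h1 * Q * PQ = 0"
    and u2: "f2 * X * PX + g2 * L * PL + h2 * Q * PQ = 0"
  defines "B12 \<equiv> k * (g1 * L * X1 - f1 * X * L1)" and "B13 \<equiv> k * (h1 * Q * X1 - f1 * X * Q1)"
    and "B22 \<equiv> k * (g2 * L * X2 - f2 * X * L2)" and "B23 \<equiv> k * (h2 * Q * X2 - f2 * X * Q2)"
  shows "PL * (B12 * B23 - B22 * B13) = 0" and "PQ * (B12 * B23 - B22 * B13) = 0"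
proof -
  have r1: "PL * B12 + PQ * B13 = 0"
  proof -
    have "PL * B12 + PQ * B13 = k * (X1 * (f1 * X * PX + g1 * L * PL + h1 * Q * PQ)
        - f1 * X * (PX * X1 + PL * L1 + PQ * Q1))"
      by (simp add: B12_def B13_def algebra_simps)
    then show ?thesis using e1 u1 by simp
  qed
  have r2: "PL * B22 + PQ * B23 = 0"
  proof -
    have "PL * B22 + PQ * B23 = k * (X2 * (f2 * X * PX + g2 * L * PL + h2 * Q * PQ)
        - f2 * X * (PX * X2 + PL * L2 + PQ * Q2))"
      by (simp add: B22_def B23_def algebra_simps)
    then show ?thesis using e2 u2 by simp
  qed
  have "PL * (B12 * B23 - B22 * B13) = B23 * (PL * B12 + PQ * B13) - B13 * (PL * B22 + PQ * B23)"
    by (simp add: algebra_simps)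
  then show "PL * (B12 * B23 - B22 * B13) = 0" using r1 r2 by simp
  have "PQ * (B12 * B23 - B22 * B13) = B12 * (PL * B22 + PQ * B23) - B22 * (PL * B12 + PQ * B13)"
    by (simp add: algebra_simps)
  then show "PQ * (B12 * B23 - B22 * B13) = 0" using r1 r2 by simp
qed

lemma TF_annihilates_pderiv_coeffs:
  assumes F: "holomorphic_H2 F" and c: "poly_coeffs 3 c"
    and hom1: "weighted_homogeneous (FLP_weight f1) W1 c"
    and hom2: "weighted_homogeneous (FLP_weight f2) W2 c"
    and V: "open V" "V \<subseteq> upper_half \<times> upper_half"
    and zero: "\<And>x y. (x, y) \<in> V \<Longrightarrow> poly_eval c (FLP f1 f2 F) x y = 0"
    and ab: "(a, b) \<in> V"
  shows "poly_eval (pderiv_coeffs 1 c) (FLP f1 f2 F) a b * TF f1 f2 F a b = 0"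
    and "poly_eval (pderiv_coeffs 2 c) (FLP f1 f2 F) a b * TF f1 f2 F a b = 0"
proof -
  let ?P = "\<lambda>i. poly_eval (pderiv_coeffs i c) (FLP f1 f2 F) a b"
  have rel: "(\<Sum>i<3. ?P i * pd j (FLP f1 f2 F ! i) a b) = 0" if "j = 1 \<or> j = 2" for j
    using poly_eval_vanishing_imp_pd_relation[OF holomorphic_H2_FLP[OF F] _ V zero ab that] c by simp
  have euler: "(\<Sum>i<3. of_int (FLP_weight f i) * (FLP f1 f2 F ! i) a b * ?P i) = 0"
    if "weighted_homogeneous (FLP_weight f) W c" for f W
    using poly_eval_euler[of "FLP f1 f2 F" c, OF _ that] c zero[OF ab] by simp
  have e1: "?P 0 * pd1 F a b + ?P 1 * pd1 (LambdaF F) a b + ?P 2 * pd1 (PiF f1 f2 F) a b = 0"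
    and e2: "?P 0 * pd2 F a b + ?P 1 * pd2 (LambdaF F) a b + ?P 2 * pd2 (PiF f1 f2 F) a b = 0"
    using rel[of 1] rel[of 2] by (simp_all add: sum_lessThan_3 FLP_def pd_def)
  have u1: "of_int f1 * F a b * ?P 0 + of_int (2 * f1 + 2) * LambdaF F a b * ?P 1
      + of_int (4 * f1 + 4) * PiF f1 f2 F a b * ?P 2 = 0"
    and u2: "of_int f2 * F a b * ?P 0 + of_int (2 * f2 + 2) * LambdaF F a b * ?P 1
      + of_int (4 * f2 + 4) * PiF f1 f2 F a b * ?P 2 = 0"
    using euler[OF hom1] euler[OF hom2] by (simp_all add: sum_lessThan_3 FLP_def FLP_weight_def)
  show "?P 1 * TF f1 f2 F a b = 0" "?P 2 * TF f1 f2 F a b = 0"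
    using cramer_brackets[OF e1 e2 u1 u2, where k = "inverse (2 * of_real pi * \<i>)"]
    unfolding TF_def bracket1_def by (simp_all add: pd_def)
qed

lemma poly_eval_zero_coeffs [simp]: "poly_eval (\<lambda>_. 0) gs a b = 0"
  by (simp add: poly_eval_def)

lemma pderiv_coeffs_0_vanishing:
  assumes F: "holomorphic_H2 F" and c: "poly_coeffs 3 c"
    and V: "open V" "V \<subseteq> upper_half \<times> upper_half"
    and zero: "\<And>x y. (x, y) \<in> V \<Longrightarrow> poly_eval c (FLP f1 f2 F) x y = 0"
    and D: "pderiv_coeffs 1 c = (\<lambda>_. 0)" "pderiv_coeffs 2 c = (\<lambda>_. 0)"
    and ab: "(a, b) \<in> V" and j: "j = 1 \<or> j = 2" and nz: "pd j F a b \<noteq> 0"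
  shows "poly_eval (pderiv_coeffs 0 c) (FLP f1 f2 F) a b = 0"
proof -
  have "(\<Sum>i<3. poly_eval (pderiv_coeffs i c) (FLP f1 f2 F) a b * pd j (FLP f1 f2 F ! i) a b) = 0"
    using poly_eval_vanishing_imp_pd_relation[OF holomorphic_H2_FLP[OF F] _ V zero ab j] c by simp
  then have "poly_eval (pderiv_coeffs 0 c) (FLP f1 f2 F) a b * pd j F a b = 0"
    unfolding sum_lessThan_3 D by (simp add: FLP_def)
  then show ?thesis using nz by simp
qed

lemma pd_nonzero_if_TF_nonzero:
  assumes V: "open V" "V \<noteq> {}" and TF: "\<And>x y. (x, y) \<in> V \<Longrightarrow> TF f1 f2 F x y \<noteq> 0"
  obtains j x y where "j = 1 \<or> j = 2" "(x, y) \<in> V" "pd j F x y \<noteq> 0"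
proof (rule ccontr)
  assume "\<not> thesis"
  with that have "pd 1 F x y = 0 \<and> pd 2 F x y = 0" if "(x, y) \<in> V" for x y
    using \<open>(x, y) \<in> V\<close> by blast
  then have "LambdaF F x y = 0" if "(x, y) \<in> V" for x y
    using that LambdaF_eq_0_on_open[OF V(1)] unfolding pd_1 pd_2 by blast
  moreover obtain a b where "(a, b) \<in> V" using V(2) by auto
  ultimately show False using TF TF_eq_0_on_open[OF V(1)] by blast
qed

lemma FLP_relation_trivial_induct:
  assumes F: "holomorphic_H2 F"
  shows "(\<And>\<alpha>. c \<alpha> \<noteq> 0 \<Longrightarrow> sum_list \<alpha> < d) \<Longrightarrow> poly_coeffs 3 c
    \<Longrightarrow> weighted_homogeneous (FLP_weight f1) W1 c \<Longrightarrow> weighted_homogeneous (FLP_weight f2) W2 c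
    \<Longrightarrow> open V \<Longrightarrow> V \<noteq> {} \<Longrightarrow> V \<subseteq> upper_half \<times> upper_half
    \<Longrightarrow> (\<And>x y. (x, y) \<in> V \<Longrightarrow> TF f1 f2 F x y \<noteq> 0)
    \<Longrightarrow> (\<And>x y. (x, y) \<in> V \<Longrightarrow> poly_eval c (FLP f1 f2 F) x y = 0)
    \<Longrightarrow> c = (\<lambda>_. 0)"
proof (induction d arbitrary: c W1 W2 V)
  case 0
  then show ?case by fastforce
next
  case (Suc d)
  note c = Suc.prems(2) and V = Suc.prems(5-7) and TF = Suc.prems(8) and zero = Suc.prems(9)
  have IH: "pderiv_coeffs i c = (\<lambda>_. 0)"
    if i: "i < 3" and V': "open V'" "V' \<noteq> {}" "V' \<subseteq> V"
      and zero': "\<And>x y. (x, y) \<in> V' \<Longrightarrow> poly_eval (pderiv_coeffs i c) (FLP f1 f2 F) x y = 0" for i V'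
  proof (rule Suc.IH[of _ "W1 - FLP_weight f1 i" "W2 - FLP_weight f2 i" V'])
    show "sum_list \<alpha> < d" if "pderiv_coeffs i c \<alpha> \<noteq> 0" for \<alpha>
      using Suc.prems(1)[OF pderiv_coeffs_support(1)[OF c that]] sum_list_pderiv_support[OF c i that]
      by simp
    show "poly_coeffs 3 (pderiv_coeffs i c)" by (rule poly_coeffs_pderiv_coeffs[OF c i])
    show "weighted_homogeneous (FLP_weight f1) (W1 - FLP_weight f1 i) (pderiv_coeffs i c)"
      "weighted_homogeneous (FLP_weight f2) (W2 - FLP_weight f2 i) (pderiv_coeffs i c)"
      using Suc.prems(3,4) c i by (auto intro: weighted_homogeneous_pderiv_coeffs)
  qed (use V' V TF zero' in auto)
  have D12: "pderiv_coeffs 1 c = (\<lambda>_. 0)" "pderiv_coeffs 2 c = (\<lambda>_. 0)"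
    using TF_annihilates_pderiv_coeffs[OF F c Suc.prems(3,4) V(1,3) zero] TF V
    by (auto intro!: IH)
  obtain j a0 b0 where j: "j = 1 \<or> j = 2" and ab0: "(a0, b0) \<in> V" "pd j F a0 b0 \<noteq> 0"
    using pd_nonzero_if_TF_nonzero[OF V(1,2) TF] .
  define V' where "V' = V \<inter> {(x, y) \<in> upper_half \<times> upper_half. pd j F x y \<noteq> 0}"
  have D0: "pderiv_coeffs 0 c = (\<lambda>_. 0)"
  proof (rule IH)
    show "open V'"
      unfolding V'_def by (intro open_Int V(1) open_nonzero_set holomorphic_H2_pd F)
  qed (use ab0 V in \<open>auto simp: V'_def intro!: pderiv_coeffs_0_vanishing[OF F c V(1,3) zero D12 _ j]\<close>)
  have D: "pderiv_coeffs i c = (\<lambda>_. 0)" if "i < 3" for i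
  proof -
    have "i = 0 \<or> i = 1 \<or> i = 2" using that by auto
    then show ?thesis using D0 D12 by auto
  qed
  obtain a b where ab: "(a, b) \<in> V" using V(2) by auto
  have "c (replicate 3 0) = 0"
    using zero[OF ab] poly_val_eq_constant_coeff[OF c D] by (simp add: poly_eval_eq_poly_val)
  then show ?case
    using pderiv_coeffs_eq_0_imp_constant[OF c D] by fastforce
qed

theorem FLP_relation_trivial:
  assumes F: "holomorphic_H2 F" and c: "poly_coeffs 3 c"
    and hom: "weighted_homogeneous (FLP_weight f1) W1 c" "weighted_homogeneous (FLP_weight f2) W2 c"
    and V: "open V" "V \<noteq> {}" "V \<subseteq> upper_half \<times> upper_half"
    and TF: "\<And>x y. (x, y) \<in> V \<Longrightarrow> TF f1 f2 F x y \<noteq> 0"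
    and zero: "\<And>x y. (x, y) \<in> V \<Longrightarrow> poly_eval c (FLP f1 f2 F) x y = 0"
  shows "c = (\<lambda>_. 0)"
proof -
  have "sum_list \<alpha> < Suc (Max (sum_list ` {\<alpha>. c \<alpha> \<noteq> 0}))" if "c \<alpha> \<noteq> 0" for \<alpha>
    using poly_coeffsD(1)[OF c] that by (simp add: le_imp_less_Suc)
  then show ?thesis by (rule FLP_relation_trivial_induct[OF F _ c hom V TF zero])
qed

section \<open>Algebraic independence\<close>

lemma parallel_weight_if_symmetric:
  assumes F: "holomorphic_H2 F" and aut: "shear_automorphic F f1 f2 1 1" and sym: "symmetric_form F"
    and pq: "p \<in> upper_half" "q \<in> upper_half" "F p q \<noteq> 0"
  shows "f1 = f2"
proof -
  let ?j = "shear_factor 1"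
  define g where "g a b = ?j a powi f1 * ?j b powi f2 - ?j b powi f1 * ?j a powi f2" for a b
  define V where "V = {(a, b) \<in> upper_half \<times> upper_half. F a b \<noteq> 0}"
  have g0: "g a b = 0" if "(a, b) \<in> V" for a b
  proof -
    have a: "a \<in> upper_half" and b: "b \<in> upper_half" and nz: "F a b \<noteq> 0"
      using that by (auto simp: V_def)
    have "?j a powi f1 * ?j b powi f2 * F a b = F (shear 1 a) (shear 1 b)"
      using aut a b by (simp add: shear_automorphic_def)
    also have "\<dots> = F (shear 1 b) (shear 1 a)"
      using sym shear_in_upper_half a b by (simp add: symmetric_form_def)
    also have "\<dots> = ?j b powi f1 * ?j a powi f2 * F a b"
      using aut sym a b by (simp add: shear_automorphic_def symmetric_form_def)
    finally show ?thesis using nz by (simp add: g_def)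
  qed
  have jp: "?j p \<noteq> 0" and jq: "?j q \<noteq> 0" using shear_factor_nonzero pq by auto
  have "((\<lambda>w. g w q) has_field_derivative
      of_int f1 * ?j p powi (f1 - 1) * ?j q powi f2 - ?j q powi f1 * (of_int f2 * ?j p powi (f2 - 1))) (at p)"
    unfolding g_def using jp by (auto intro!: derivative_eq_intros has_field_derivative_shear_factor)
  moreover have "pd1 g p q = 0"
    using pq by (intro pd1_eq_0_on_open[OF open_nonzero_set[OF F] g0[unfolded V_def]]) auto
  ultimately have "of_int f1 * ?j p powi (f1 - 1) * ?j q powi f2 - ?j q powi f1 * (of_int f2 * ?j p powi (f2 - 1)) = 0"
    by (simp add: pd1_def DERIV_imp_deriv)
  then have "(of_int f1 - of_int f2) * (?j p powi f1 * ?j q powi f2) = 0"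
    using g0[of p q] pq jp by (simp add: V_def g_def power_int_diff field_simps)
  then show ?thesis using jp jq by simp
qed

lemma alg_indep_if_bihomogeneous_relations_trivial:
  assumes om: "\<omega>1 \<noteq> \<omega>2"
    and aut: "\<And>(n::int) (m::int) i. i < length gs \<Longrightarrow>
       shear_automorphic (gs ! i) (wt1 i) (wt2 i) (n + m * \<omega>1) (n + m * \<omega>2)"
    and trivial: "\<And>c W1 W2. poly_coeffs (length gs) c \<Longrightarrow> weighted_homogeneous wt1 W1 c
       \<Longrightarrow> weighted_homogeneous wt2 W2 c
       \<Longrightarrow> (\<And>z1 z2. z1 \<in> upper_half \<Longrightarrow> z2 \<in> upper_half \<Longrightarrow> poly_eval c gs z1 z2 = 0)
       \<Longrightarrow> c = (\<lambda>_. 0)"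
  shows "alg_indep gs"
  unfolding alg_indep_def
proof (intro allI impI)
  fix c :: "nat list \<Rightarrow> complex"
  assume "finite {\<alpha>. c \<alpha> \<noteq> 0}" "\<forall>\<alpha>. c \<alpha> \<noteq> 0 \<longrightarrow> length \<alpha> = length gs" "\<exists>\<alpha>. c \<alpha> \<noteq> 0"
  then obtain \<alpha>0 where c: "poly_coeffs (length gs) c" and \<alpha>0: "c \<alpha>0 \<noteq> 0"
    by (auto simp: poly_coeffs_def)
  define c' where "c' = bihomogeneous_part wt1 wt2 (weight wt1 \<alpha>0, weight wt2 \<alpha>0) c"
  show "\<exists>z1\<in>upper_half. \<exists>z2\<in>upper_half. poly_eval c gs z1 z2 \<noteq> 0"
  proof (rule ccontr)
    assume "\<not> ?thesis"
    then have "poly_eval c' gs z1 z2 = 0" if "z1 \<in> upper_half" "z2 \<in> upper_half" for z1 z2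
      unfolding c'_def using that by (intro bihomogeneous_part_vanishes[OF c om aut]) auto
    then have "c' = (\<lambda>_. 0)"
      unfolding c'_def
      by (rule trivial[OF bihomogeneous_part_poly_coeffs[OF c] weighted_homogeneous_bihomogeneous_part])
    then have "c' \<alpha>0 = 0" by simp
    then show False using \<alpha>0 by (simp add: c'_def bihomogeneous_part_def)
  qed
qed

lemma open_TF_nonzero_set:
  assumes "holomorphic_H2 F"
  shows "open {(a, b) \<in> upper_half \<times> upper_half. TF f1 f2 F a b \<noteq> 0}"
  by (rule open_nonzero_set[OF holomorphic_H2_TF[OF assms]])

lemma alg_indep_FLP:
  assumes F: "holomorphic_H2 F" and om: "\<omega>1 \<noteq> \<omega>2"
    and aut: "\<And>(n::int) (m::int). shear_automorphic F f1 f2 (n + m * \<omega>1) (n + m * \<omega>2)"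
    and TF: "a \<in> upper_half" "b \<in> upper_half" "TF f1 f2 F a b \<noteq> 0"
  shows "alg_indep (FLP f1 f2 F)"
proof (rule alg_indep_if_bihomogeneous_relations_trivial[OF om])
  fix n m :: int and i assume "i < length (FLP f1 f2 F)"
  interpret shear_modular F f1 f2 "n + m * \<omega>1" "n + m * \<omega>2"
    using F aut by unfold_locales
  have "i = 0 \<or> i = 1 \<or> i = 2" using \<open>i < length (FLP f1 f2 F)\<close> by auto
  then show "shear_automorphic (FLP f1 f2 F ! i) (FLP_weight f1 i) (FLP_weight f2 i)
      (n + m * \<omega>1) (n + m * \<omega>2)"
    using automorphic shear_automorphic_LambdaF shear_automorphic_PiF
    by (auto simp: FLP_def FLP_weight_def)
next
  fix c W1 W2
  assume c: "poly_coeffs (length (FLP f1 f2 F)) c"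
    and hom: "weighted_homogeneous (FLP_weight f1) W1 c" "weighted_homogeneous (FLP_weight f2) W2 c"
    and zero: "\<And>z1 z2. z1 \<in> upper_half \<Longrightarrow> z2 \<in> upper_half \<Longrightarrow> poly_eval c (FLP f1 f2 F) z1 z2 = 0"
  show "c = (\<lambda>_. 0)"
    by (rule FLP_relation_trivial[OF F c[simplified] hom open_TF_nonzero_set[OF F]])
       (use TF zero in auto)
qed

lemma length_3_conv: "length xs = 3 \<Longrightarrow> xs = [xs ! 0, xs ! 1, xs ! 2]"
  by (rule nth_equalityI) (auto simp: less_Suc_eq numeral_eq_Suc)

lemma weight_length_3:
  "length \<alpha> = 3 \<Longrightarrow> weight wt \<alpha> = wt 0 * int (\<alpha> ! 0) + wt 1 * int (\<alpha> ! 1) + wt 2 * int (\<alpha> ! 2)"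
  by (simp add: weight_def sum_lessThan_3)

lemma weight_length_4:
  "length \<alpha> = 4 \<Longrightarrow> weight wt \<alpha>
    = wt 0 * int (\<alpha> ! 0) + wt 1 * int (\<alpha> ! 1) + wt 2 * int (\<alpha> ! 2) + wt 3 * int (\<alpha> ! 3)"
  by (simp add: weight_def lessThan_nat_numeral numeral_2_eq_2 numeral_3_eq_3)

text \<open>If \<open>\<alpha>\<^sub>2 - \<alpha>\<^sub>3 = k\<^sub>1 - k\<^sub>2\<close> on the support of \<open>c\<close>, then
  \<open>P(F, \<Lambda>, \<Pi>\<^sub>1, \<Pi>\<^sub>2) = \<Pi>\<^sub>1\<^sup>k\<^sup>1 \<Pi>\<^sub>2\<^sup>k\<^sup>2 Q(F, \<Lambda>, \<Pi>\<^sub>1\<Pi>\<^sub>2)\<close> with the coefficients of \<open>Q\<close> given here.\<close>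
definition PiF_coeffs :: "nat \<Rightarrow> nat \<Rightarrow> (nat list \<Rightarrow> complex) \<Rightarrow> nat list \<Rightarrow> complex" where
  "PiF_coeffs k1 k2 c \<beta> = (if length \<beta> = 3 then c [\<beta> ! 0, \<beta> ! 1, \<beta> ! 2 + k1, \<beta> ! 2 + k2] else 0)"

locale fixed_PiOp_exponent_gap =
  fixes c :: "nat list \<Rightarrow> complex" and k1 k2 :: nat
  assumes coeffs: "poly_coeffs 4 c"
    and difference: "\<And>\<alpha>. c \<alpha> \<noteq> 0 \<Longrightarrow> int (\<alpha> ! 2) - int (\<alpha> ! 3) = int k1 - int k2"
    and one_zero: "k1 = 0 \<or> k2 = 0"
begin

definition merge :: "nat list \<Rightarrow> nat list" where
  "merge \<alpha> = [\<alpha> ! 0, \<alpha> ! 1, min (\<alpha> ! 2) (\<alpha> ! 3)]"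

definition split :: "nat list \<Rightarrow> nat list" where
  "split \<beta> = [\<beta> ! 0, \<beta> ! 1, \<beta> ! 2 + k1, \<beta> ! 2 + k2]"

lemma split_merge:
  assumes "c \<alpha> \<noteq> 0"
  shows "split (merge \<alpha>) = \<alpha>"
proof (rule nth_equalityI)
  have len: "length \<alpha> = 4" using poly_coeffsD(2)[OF coeffs assms] .
  then show "length (split (merge \<alpha>)) = length \<alpha>" by (simp add: split_def)
  have "min (\<alpha> ! 2) (\<alpha> ! 3) + k1 = \<alpha> ! 2" "min (\<alpha> ! 2) (\<alpha> ! 3) + k2 = \<alpha> ! 3"
    using difference[OF assms] one_zero by auto
  moreover fix i assume "i < length (split (merge \<alpha>))"
  then have "i = 0 \<or> i = 1 \<or> i = 2 \<or> i = 3" by (auto simp: split_def)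
  ultimately show "split (merge \<alpha>) ! i = \<alpha> ! i" by (auto simp: split_def merge_def)
qed

lemma PiF_coeffs_merge: "c \<alpha> \<noteq> 0 \<Longrightarrow> PiF_coeffs k1 k2 c (merge \<alpha>) = c \<alpha>"
  using split_merge by (simp add: PiF_coeffs_def merge_def split_def)

lemma merge_split: "length \<beta> = 3 \<Longrightarrow> merge (split \<beta>) = \<beta>"
  using one_zero length_3_conv[of \<beta>] by (auto simp: merge_def split_def)

lemma PiF_coeffs_support: "PiF_coeffs k1 k2 c \<beta> \<noteq> 0 \<Longrightarrow> length \<beta> = 3 \<and> c (split \<beta>) \<noteq> 0"
  by (auto simp: PiF_coeffs_def split_def split: if_splits)

lemma poly_coeffs_PiF_coeffs: "poly_coeffs 3 (PiF_coeffs k1 k2 c)"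
proof -
  have "{\<beta>. PiF_coeffs k1 k2 c \<beta> \<noteq> 0} \<subseteq> merge ` {\<alpha>. c \<alpha> \<noteq> 0}"
  proof
    fix \<beta> assume "\<beta> \<in> {\<beta>. PiF_coeffs k1 k2 c \<beta> \<noteq> 0}"
    with PiF_coeffs_support merge_split show "\<beta> \<in> merge ` {\<alpha>. c \<alpha> \<noteq> 0}"
      by (intro image_eqI[where x = "split \<beta>"]) auto
  qed
  then show ?thesis
    using finite_surj[OF poly_coeffsD(1)[OF coeffs]] PiF_coeffs_support by (auto simp: poly_coeffs_def)
qed

lemma monomial_val_split:
  "monomial_val [x0, x1, y1, y2] (split \<beta>) = y1 ^ k1 * y2 ^ k2 * monomial_val [x0, x1, y1 * y2] \<beta>"
  by (simp add: monomial_val_def split_def lessThan_nat_numeral power_add power_mult_distrib numeral_2_eq_2 mult_ac)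

lemma poly_val_split:
  "poly_val c [x0, x1, y1, y2] = y1 ^ k1 * y2 ^ k2 * poly_val (PiF_coeffs k1 k2 c) [x0, x1, y1 * y2]"
  unfolding poly_val_def sum_distrib_left
proof (rule sum.reindex_bij_witness[where i = split and j = merge])
  fix \<alpha> assume "\<alpha> \<in> {\<alpha>. c \<alpha> \<noteq> 0}"
  then have \<alpha>: "c \<alpha> \<noteq> 0" by simp
  show "split (merge \<alpha>) = \<alpha>" "merge \<alpha> \<in> {\<beta>. PiF_coeffs k1 k2 c \<beta> \<noteq> 0}"
    using split_merge[OF \<alpha>] PiF_coeffs_merge[OF \<alpha>] \<alpha> by auto
  show "y1 ^ k1 * y2 ^ k2 * (PiF_coeffs k1 k2 c (merge \<alpha>) * monomial_val [x0, x1, y1 * y2] (merge \<alpha>))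
      = c \<alpha> * monomial_val [x0, x1, y1, y2] \<alpha>"
    using monomial_val_split[of x0 x1 y1 y2 "merge \<alpha>"]
    by (simp add: split_merge[OF \<alpha>] PiF_coeffs_merge[OF \<alpha>] mult_ac)
next
  fix \<beta> assume "\<beta> \<in> {\<beta>. PiF_coeffs k1 k2 c \<beta> \<noteq> 0}"
  with PiF_coeffs_support merge_split
  show "merge (split \<beta>) = \<beta>" "split \<beta> \<in> {\<alpha>. c \<alpha> \<noteq> 0}" by auto
qed

lemma poly_eval_PiOp_factor:
  "poly_eval c [F, LambdaF F, PiOp 1 f1 F, PiOp 2 f2 F] a b
    = PiOp 1 f1 F a b ^ k1 * PiOp 2 f2 F a b ^ k2 * poly_eval (PiF_coeffs k1 k2 c) (FLP f1 f2 F) a b"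
  by (simp add: poly_eval_eq_poly_val FLP_def PiF_def poly_val_split)

lemma weighted_homogeneous_PiF_coeffs:
  assumes hom: "weighted_homogeneous wt W c"
    and wt: "wt 0 = f" "wt 1 = 2 * f + 2" "wt 3 = 4 * f + 4 - wt 2"
  shows "weighted_homogeneous (FLP_weight f) (W - wt 2 * k1 - wt 3 * k2) (PiF_coeffs k1 k2 c)"
  unfolding weighted_homogeneous_def
proof (intro allI impI)
  fix \<beta> assume "PiF_coeffs k1 k2 c \<beta> \<noteq> 0"
  then have len: "length \<beta> = 3" and "c (split \<beta>) \<noteq> 0" using PiF_coeffs_support by auto
  then have "W = weight wt (split \<beta>)" using hom by (simp add: weighted_homogeneous_def)
  also have "\<dots> = wt 0 * int (\<beta> ! 0) + wt 1 * int (\<beta> ! 1) + wt 2 * int (\<beta> ! 2 + k1)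
      + wt 3 * int (\<beta> ! 2 + k2)"
    using len by (simp add: weight_length_4 split_def)
  also have "\<dots> = weight (FLP_weight f) \<beta> + wt 2 * k1 + wt 3 * k2"
    unfolding wt weight_length_3[OF len] FLP_weight_def by (simp add: algebra_simps)
  finally show "weight (FLP_weight f) \<beta> = W - wt 2 * k1 - wt 3 * k2" by simp
qed

end

definition PiOp_weight1 :: "int \<Rightarrow> nat \<Rightarrow> int" where
  "PiOp_weight1 f i = [f, 2 * f + 2, 2 * f + 4, 2 * f] ! i"

definition PiOp_weight2 :: "int \<Rightarrow> nat \<Rightarrow> int" where
  "PiOp_weight2 f i = [f, 2 * f + 2, 2 * f, 2 * f + 4] ! i"

text \<open>For parallel weight, the two weights of a monomial
  \<open>F\<^sup>\<alpha>\<^sup>0 \<Lambda>\<^sup>\<alpha>\<^sup>1 \<Pi>\<^sub>1\<^sup>\<alpha>\<^sup>2 \<Pi>\<^sub>2\<^sup>\<alpha>\<^sup>3\<close> differ by \<open>4(\<alpha>\<^sub>2 - \<alpha>\<^sub>3)\<close>, so a bihomogeneous relation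
  is \<open>\<Pi>\<^sub>1\<^sup>k\<^sup>1 \<Pi>\<^sub>2\<^sup>k\<^sup>2\<close> times a homogeneous relation between \<open>F, \<Lambda>, \<Pi>\<^sub>1\<Pi>\<^sub>2\<close>.\<close>
lemma F_LambdaF_PiOp_relation_trivial:
  assumes F: "holomorphic_H2 F" and TF: "a \<in> upper_half" "b \<in> upper_half" "TF f f F a b \<noteq> 0"
    and c: "poly_coeffs 4 c"
    and hom: "weighted_homogeneous (PiOp_weight1 f) W1 c" "weighted_homogeneous (PiOp_weight2 f) W2 c"
    and zero: "\<And>z1 z2. z1 \<in> upper_half \<Longrightarrow> z2 \<in> upper_half
      \<Longrightarrow> poly_eval c [F, LambdaF F, PiOp 1 f F, PiOp 2 f F] z1 z2 = 0"
  shows "c = (\<lambda>_. 0)"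
proof -
  define k where "k = (W1 - W2) div 4"
  have "int (\<alpha> ! 2) - int (\<alpha> ! 3) = int (nat k) - int (nat (- k))" if "c \<alpha> \<noteq> 0" for \<alpha>
  proof -
    have len: "length \<alpha> = 4" using poly_coeffsD(2)[OF c that] .
    have "W1 - W2 = weight (PiOp_weight1 f) \<alpha> - weight (PiOp_weight2 f) \<alpha>"
      using hom that by (simp add: weighted_homogeneous_def)
    also have "\<dots> = 4 * (int (\<alpha> ! 2) - int (\<alpha> ! 3))"
      by (simp add: weight_length_4[OF len] PiOp_weight1_def PiOp_weight2_def algebra_simps)
    finally show ?thesis by (simp add: k_def)
  qed
  then interpret fixed_PiOp_exponent_gap c "nat k" "nat (- k)"
    using c by unfold_locales auto
  let ?c3 = "PiF_coeffs (nat k) (nat (- k)) c"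
  define V where "V = {(x, y) \<in> upper_half \<times> upper_half. TF f f F x y \<noteq> 0}
    \<inter> {(x, y) \<in> upper_half \<times> upper_half. PiF f f F x y \<noteq> 0}"
  have "V \<noteq> {}"
  proof
    assume "V = {}"
    then have "\<forall>(x, y)\<in>{(x, y) \<in> upper_half \<times> upper_half. TF f f F x y \<noteq> 0}. PiF f f F x y = 0"
      by (auto simp: V_def)
    then have "TF f f F a b = 0"
      using TF by (intro TF_eq_0_on_open[OF open_TF_nonzero_set[OF F]]) auto
    then show False using TF by simp
  qed
  moreover have "open V"
    unfolding V_def by (intro open_Int open_TF_nonzero_set open_nonzero_set holomorphic_H2_PiF F)
  moreover have "poly_eval ?c3 (FLP f f F) x y = 0" if "(x, y) \<in> V" for x y
    using that zero[of x y] poly_eval_PiOp_factor[of F f f x y] by (auto simp: V_def PiF_def)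
  moreover have "weighted_homogeneous (FLP_weight f) (W1 - (2 * f + 4) * nat k - 2 * f * nat (- k)) ?c3"
    and "weighted_homogeneous (FLP_weight f) (W2 - 2 * f * nat k - (2 * f + 4) * nat (- k)) ?c3"
    using weighted_homogeneous_PiF_coeffs[OF hom(1)] weighted_homogeneous_PiF_coeffs[OF hom(2)]
    by (simp_all add: PiOp_weight1_def PiOp_weight2_def)
  ultimately have "?c3 = (\<lambda>_. 0)"
    by (intro FLP_relation_trivial[OF F poly_coeffs_PiF_coeffs]) (auto simp: V_def)
  then show "c = (\<lambda>_. 0)"
    using PiF_coeffs_merge by fastforce
qed

lemma alg_indep_F_LambdaF_PiOp:
  assumes F: "holomorphic_H2 F" and om: "\<omega>1 \<noteq> \<omega>2"
    and aut: "\<And>(n::int) (m::int). shear_automorphic F f f (n + m * \<omega>1) (n + m * \<omega>2)"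
    and TF: "a \<in> upper_half" "b \<in> upper_half" "TF f f F a b \<noteq> 0"
  shows "alg_indep [F, LambdaF F, PiOp 1 f F, PiOp 2 f F]"
proof (rule alg_indep_if_bihomogeneous_relations_trivial[of _ _ _ "PiOp_weight1 f" "PiOp_weight2 f", OF om])
  fix n m :: int and i assume i: "i < length [F, LambdaF F, PiOp 1 f F, PiOp 2 f F]"
  interpret shear_modular F f f "n + m * \<omega>1" "n + m * \<omega>2"
    using F aut by unfold_locales
  have "i = 0 \<or> i = 1 \<or> i = 2 \<or> i = 3" using i by auto
  then show "shear_automorphic ([F, LambdaF F, PiOp 1 f F, PiOp 2 f F] ! i) (PiOp_weight1 f i) (PiOp_weight2 f i)
      (n + m * \<omega>1) (n + m * \<omega>2)"
    using automorphic shear_automorphic_LambdaF shear_automorphic_PiOp1 shear_automorphic_PiOp2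
    by (auto simp: PiOp_weight1_def PiOp_weight2_def)
next
  fix c W1 W2
  assume "poly_coeffs (length [F, LambdaF F, PiOp 1 f F, PiOp 2 f F]) c"
    and "weighted_homogeneous (PiOp_weight1 f) W1 c" "weighted_homogeneous (PiOp_weight2 f) W2 c"
    and "\<And>z1 z2. z1 \<in> upper_half \<Longrightarrow> z2 \<in> upper_half
      \<Longrightarrow> poly_eval c [F, LambdaF F, PiOp 1 f F, PiOp 2 f F] z1 z2 = 0"
  then show "c = (\<lambda>_. 0)"
    by (intro F_LambdaF_PiOp_relation_trivial[OF F TF]) (simp_all add: numeral_eq_Suc)
qed

lemma hilbert_modular_form_holomorphic_H2: "hilbert_modular_form d f1 f2 F \<Longrightarrow> holomorphic_H2 F"
  by (simp add: hilbert_modular_form_def holomorphic_H2_def)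

lemma hilbert_modular_form_shear_automorphic:
  fixes n m :: int
  assumes "hilbert_modular_form d f1 f2 F"
  shows "shear_automorphic F f1 f2 (n + m * omega1 d) (n + m * omega2 d)"
proof -
  have "((1, 0), (0, 0), (n, m), (1, 0)) \<in> SL2_OK d"
    by (simp add: SL2_OK_def emb1_def)
  then show ?thesis
    using assms unfolding hilbert_modular_form_def shear_automorphic_def
    by (fastforce simp: mob_def shear_def shear_factor_def emb1_def emb2_def)
qed

lemma omega1_neq_omega2: "d > 1 \<Longrightarrow> omega1 d \<noteq> omega2 d"
  by (auto simp: omega1_def omega2_def)

text \<open>Only the lower unipotent elements of \<open>SL\<^sub>2(\<O>\<^sub>K)\<close> enter the proof.\<close>
theorem mainTheorem19:
  fixes d f1 f2 :: int and F :: "complex \<Rightarrow> complex \<Rightarrow> complex"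
  assumes "d > 1" and "squarefree d"
    and "OK_principal d"
    and "hilbert_modular_form d f1 f2 F"
    and "symmetric_form F"
    and "\<exists>z1\<in>upper_half. \<exists>z2\<in>upper_half. TF f1 f2 F z1 z2 \<noteq> 0"
  shows "alg_indep [F, LambdaF F, PiOp 1 f1 F, PiOp 2 f2 F]
       \<and> alg_indep [F, LambdaF F, PiF f1 f2 F]"
proof -
  have F: "holomorphic_H2 F" using assms(4) by (rule hilbert_modular_form_holomorphic_H2)
  note aut = hilbert_modular_form_shear_automorphic[OF assms(4)]
  have om: "omega1 d \<noteq> omega2 d" using assms(1) by (rule omega1_neq_omega2)
  obtain a b where TF: "a \<in> upper_half" "b \<in> upper_half" "TF f1 f2 F a b \<noteq> 0"
    using assms(6) by blast
  have "\<exists>p\<in>upper_half. \<exists>q\<in>upper_half. F p q \<noteq> 0"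
  proof (rule ccontr)
    assume "\<not> ?thesis"
    then have "TF f1 f2 F a b = 0"
      using TF by (intro TF_eq_0_on_open[OF open_upper_half2]) auto
    then show False using TF by simp
  qed
  then have f12: "f1 = f2"
    using parallel_weight_if_symmetric[OF F _ assms(5)] aut[of 1 0] by auto
  have "alg_indep [F, LambdaF F, PiOp 1 f2 F, PiOp 2 f2 F]"
    using aut TF unfolding f12 by (rule alg_indep_F_LambdaF_PiOp[OF F om])
  moreover have "alg_indep (FLP f1 f2 F)"
    using aut TF by (rule alg_indep_FLP[OF F om])
  ultimately show ?thesis by (simp add: f12 FLP_def)
qed

end
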